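(* For every $\epsilon\in(0,1)$, Algorithm $\mathsf{DLA}$ with parameter $\epsilon$ is deterministic and uses $O(n\log(1/\epsilon)/\epsilon)$ queries to $f$. It returns a set $S$ with $c(S)\le B$ and $$\mathrm{opt}\le(6+\epsilon)f(S),$$ where $\mathrm{opt}=\max\{f(T):T\subseteq V,\ c(T)\le B\}$.
   Context: Setting: $V$ is a finite ground set of size $n$. $f:2^V\to\mathbb{R}_{\ge 0}$ is a non-negative submodular set function with $f(\emptyset)=0$. Each $e\in V$ has a cost $c(e)>0$, and $c(S)=\sum_{e\in S}c(e)$. $B>0$ is a budget, and $c(e)\le B$ for every $e\in V$. A query is one evaluation of $f$ on a set. The notation $f(e\mid S)=f(S\cup\{e\})-f(S)$ is used. Algorithm $\mathsf{LA}$ on $(f,V,B)$ runs as follows. Let $V_1=\{e:c(e)\le B/2\}$, $e_{\max}\in\arg\max_{e\in V}f(e)$ and $X=Y=\emptyset$. Process each $e\in V_1$ once. Among $Z\in\{X,Y\}$ with $f(e\mid Z)/c(e)\ge f(Z)/B$, add $e$ to one maximizing $f(e\mid Z)/c(e)$, if any such $Z$ exists. Then for $T\in\{X,Y\}$, let $T'$ be the largest-cost set formed by the last $j$ elements added to $T$ ($0\le j\le |T|$) among those with cost at most $B$. Return the best of $X'$, $Y'$ and $\{e_{\max}\}$ under $f$. Algorithm $\mathsf{DLA}$ on $(f,V,B)$ with parameter $\epsilon\in(0,1)$ runs as follows. 1. Let $S'$ be the output of $\mathsf{LA}(f,V,B)$ and set $\Gamma=f(S')$. Set $\epsilon'=\epsilon/14$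 and $\Delta=\lceil\log(1/\epsilon')/\epsilon'\rceil$. 2. Phase 1. Set $\theta=19\Gamma/(6\epsilon' B)$ and $X=Y=\emptyset$. While $\theta\ge\Gamma(1-\epsilon')/(6B)$, do the following. Process each $e\in V\setminus(X\cup Y)$ in a fixed order. Among $T\in\{X,Y\}$ with $c(T\cup\{e\})\le B$ and $f(e\mid T)/c(e)\ge\theta$, choose one maximizing $f(e\mid T)/c(e)$; if such a $T$ exists, add $e$ to it. After the pass, set $\theta\leftarrow(1-\epsilon')\theta$. 3. Phase 2. For $T\in\{X,Y\}$, let $T^i$ be the set of the first $i$ elements added to $T$. For each $l=0,1,\dots,\Delta$: - let $X'_{(l)}=X^i$ for the largest $i\le|X|$ with $c(X^i)\le\epsilon'B(1+\epsilon')^l$; - let $e_X\in\arg\max\{f(X'_{(l)}\cup\{e\}): e\in V,\ c(X'_{(l)}\cup\{e\})\le B\}$, and set $X_{(l)}=X'_{(l)}\cup\{e_X\}$; - define $Y'_{(l)}$, $e_Y$ and $Y_{(l)}$ analogously from $Y$. 4. Return the set $S$ of maximum $f$ value among $S'$, $X$, $Y$, $X_{(0)},\dots,X_{(\Delta)}$, $Y_{(0)},\dots,Y_{(\Delta)}$. *)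

theory Defs
  imports Complex_Main "HOL-Library.Monad_Syntax"
begin

text \<open>Ground set V is given as a distinct list vs fixing the processing order;
  n = length vs. Costs c, budget B, objective f on subsets of V.\<close>

definition submodular_on :: "'a set \<Rightarrow> ('a set \<Rightarrow> real) \<Rightarrow> bool" where
  "submodular_on V f \<longleftrightarrow>
     (\<forall>A B. A \<subseteq> V \<longrightarrow> B \<subseteq> V \<longrightarrow> f (A \<union> B) + f (A \<inter> B) \<le> f A + f B)"

definition cost :: "('a \<Rightarrow> real) \<Rightarrow> 'a set \<Rightarrow> real" where
  "cost c S = (\<Sum>e\<in>S. c e)"

definition opt :: "('a set \<Rightarrow> real) \<Rightarrow> ('a \<Rightarrow> real) \<Rightarrow> real \<Rightarrow> 'a set \<Rightarrow> real" where
  "opt f c B V = Max {f T | T. T \<subseteq> V \<and> cost c T \<le> B}"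

text \<open>A computation returns its result together with the number of queries to f
  it performed. f is only ever evaluated through qry, which counts one query.\<close>

type_synonym 'b cnt = "'b \<times> nat"

definition ret :: "'b \<Rightarrow> 'b cnt" where
  "ret x = (x, 0)"

definition bnd :: "'b cnt \<Rightarrow> ('b \<Rightarrow> 'c cnt) \<Rightarrow> 'c cnt" where
  "bnd m g = (case g (fst m) of (y, k) \<Rightarrow> (y, snd m + k))"

adhoc_overloading Monad_Syntax.bind \<rightleftharpoons> bnd

definition qry :: "('a set \<Rightarrow> real) \<Rightarrow> 'a set \<Rightarrow> real cnt" where
  "qry f S = (f S, 1)"

definition marg :: "('a set \<Rightarrow> real) \<Rightarrow> 'a \<Rightarrow> 'a set \<Rightarrow> real cnt" where
  "marg f e Z = do { a \<leftarrow> qry f (insert e Z); b \<leftarrow> qry f Z; ret (a - b) }"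

fun foldM :: "('x \<Rightarrow> 's \<Rightarrow> 's cnt) \<Rightarrow> 'x list \<Rightarrow> 's \<Rightarrow> 's cnt" where
  "foldM g [] s = ret s"
| "foldM g (x # xs) s = do { s' \<leftarrow> g x s; foldM g xs s' }"

fun argmax_aux :: "('x \<Rightarrow> real cnt) \<Rightarrow> 'x list \<Rightarrow> 'x \<Rightarrow> real \<Rightarrow> 'x cnt" where
  "argmax_aux g [] b bv = ret b"
| "argmax_aux g (x # xs) b bv =
     do { v \<leftarrow> g x; if v > bv then argmax_aux g xs x v else argmax_aux g xs b bv }"

fun argmaxM :: "('x \<Rightarrow> real cnt) \<Rightarrow> 'x list \<Rightarrow> 'x cnt" where
  "argmaxM g [] = ret undefined"
| "argmaxM g (x # xs) = do { v \<leftarrow> g x; argmax_aux g xs x v }"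

text \<open>X and Y are kept as lists in order of insertion. Ties between X and Y go to X.\<close>
definition la_step :: "('a set \<Rightarrow> real) \<Rightarrow> ('a \<Rightarrow> real) \<Rightarrow> real \<Rightarrow> 'a
    \<Rightarrow> 'a list \<times> 'a list \<Rightarrow> ('a list \<times> 'a list) cnt" where
  "la_step f c B e st = do {
     gX \<leftarrow> marg f e (set (fst st)); fX \<leftarrow> qry f (set (fst st));
     gY \<leftarrow> marg f e (set (snd st)); fY \<leftarrow> qry f (set (snd st));
     let okX = (gX / c e \<ge> fX / B);
     let okY = (gY / c e \<ge> fY / B);
     ret (if okX \<and> (\<not> okY \<or> gX / c e \<ge> gY / c e) then (fst st @ [e], snd st)
          else if okY then (fst st, snd st @ [e]) else st) }"

definition suffix_set :: "('a \<Rightarrow> real) \<Rightarrow> real \<Rightarrow> 'a list \<Rightarrow> 'a set" where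
  "suffix_set c B xs =
     (let j = (GREATEST j. j \<le> length xs \<and> cost c (set (drop (length xs - j) xs)) \<le> B)
      in set (drop (length xs - j) xs))"

definition LA :: "('a set \<Rightarrow> real) \<Rightarrow> ('a \<Rightarrow> real) \<Rightarrow> real \<Rightarrow> 'a list \<Rightarrow> 'a set cnt" where
  "LA f c B vs = do {
     emax \<leftarrow> argmaxM (\<lambda>e. qry f {e}) vs;
     st \<leftarrow> foldM (la_step f c B) (filter (\<lambda>e. c e \<le> B / 2) vs) ([], []);
     argmaxM (qry f) [suffix_set c B (fst st), suffix_set c B (snd st), {emax}] }"

definition p1_step :: "('a set \<Rightarrow> real) \<Rightarrow> ('a \<Rightarrow> real) \<Rightarrow> real \<Rightarrow> real \<Rightarrow> 'a
    \<Rightarrow> 'a list \<times> 'a list \<Rightarrow> ('a list \<times> 'a list) cnt" where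
  "p1_step f c B \<theta> e st =
     (if e \<in> set (fst st) \<union> set (snd st) then ret st else do {
        gX \<leftarrow> marg f e (set (fst st));
        gY \<leftarrow> marg f e (set (snd st));
        let okX = (cost c (insert e (set (fst st))) \<le> B \<and> gX / c e \<ge> \<theta>);
        let okY = (cost c (insert e (set (snd st))) \<le> B \<and> gY / c e \<ge> \<theta>);
        ret (if okX \<and> (\<not> okY \<or> gX / c e \<ge> gY / c e) then (fst st @ [e], snd st)
             else if okY then (fst st, snd st @ [e]) else st) })"

text \<open>Number of passes of the while loop of Phase 1: the loop runs with
  theta = theta0 (1-eps')^k for k = 0,1,... as long as theta >= Gamma (1-eps')/(6B).
  If Gamma = 0 the literal loop never terminates; in that degenerate case we use the
  same (Gamma-independent) number of passes as for Gamma > 0.\<close>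
definition p1_passes :: "real \<Rightarrow> real \<Rightarrow> real \<Rightarrow> nat" where
  "p1_passes \<epsilon>' \<Gamma> B =
     (if \<Gamma> > 0 then
        (LEAST k. \<not> (19 * \<Gamma> / (6 * \<epsilon>' * B) * (1 - \<epsilon>') ^ k \<ge> \<Gamma> * (1 - \<epsilon>') / (6 * B)))
      else (LEAST k. \<not> (19 / \<epsilon>' * (1 - \<epsilon>') ^ k \<ge> (1 - \<epsilon>'))))"

definition prefix_set :: "('a \<Rightarrow> real) \<Rightarrow> real \<Rightarrow> 'a list \<Rightarrow> 'a set" where
  "prefix_set c bound xs =
     set (take (GREATEST i. i \<le> length xs \<and> cost c (set (take i xs)) \<le> bound) xs)"

definition p2_cand :: "('a set \<Rightarrow> real) \<Rightarrow> ('a \<Rightarrow> real) \<Rightarrow> real \<Rightarrow> real \<Rightarrow> 'a list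
    \<Rightarrow> 'a list \<Rightarrow> nat \<Rightarrow> 'a set cnt" where
  "p2_cand f c B \<epsilon>' vs xs l = do {
     let X' = prefix_set c (\<epsilon>' * B * (1 + \<epsilon>') ^ l) xs;
     eX \<leftarrow> argmaxM (\<lambda>e. qry f (insert e X')) (filter (\<lambda>e. cost c (insert e X') \<le> B) vs);
     ret (insert eX X') }"

definition DLA :: "('a set \<Rightarrow> real) \<Rightarrow> ('a \<Rightarrow> real) \<Rightarrow> real \<Rightarrow> real \<Rightarrow> 'a list \<Rightarrow> 'a set cnt" where
  "DLA f c B \<epsilon> vs = do {
     S' \<leftarrow> LA f c B vs;
     \<Gamma> \<leftarrow> qry f S';
     let \<epsilon>' = \<epsilon> / 14;
     let \<Delta> = nat \<lceil>log 2 (1 / \<epsilon>') / \<epsilon>'\<rceil>;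
     let \<theta>0 = 19 * \<Gamma> / (6 * \<epsilon>' * B);
     st \<leftarrow> foldM (\<lambda>k st. foldM (p1_step f c B (\<theta>0 * (1 - \<epsilon>') ^ k)) vs st)
                [0..<p1_passes \<epsilon>' \<Gamma> B] ([], []);
     Xs \<leftarrow> foldM (\<lambda>l acc. do { X \<leftarrow> p2_cand f c B \<epsilon>' vs (fst st) l; ret (acc @ [X]) })
                [0..<Suc \<Delta>] [];
     Ys \<leftarrow> foldM (\<lambda>l acc. do { Y \<leftarrow> p2_cand f c B \<epsilon>' vs (snd st) l; ret (acc @ [Y]) })
                [0..<Suc \<Delta>] [];
     argmaxM (qry f) ([S', set (fst st), set (snd st)] @ Xs @ Ys) }"

end

theory Submission
  imports Defs
begin

(* LA keeps two disjoint chains X and Y and appends an element to a side only if its density is at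
   least f(side)/B. By submodularity f Q <= f (Q \<union> X) + f (Q \<union> Y) for every feasible Q, and each term
   is at most 9 f(S'): an element of Q outside a side was either rejected by it or is paid for by what
   it contributed to the other side, while a suffix of each side within budget keeps a third of its
   value. Hence opt <= 18 Gamma for Gamma = f(S').

   DLA uses Gamma to run a threshold greedy on two sides, with thresholds falling geometrically from
   19 Gamma / (6 eps' B) to below Gamma / (6 B). Let o be the costliest element of an optimum Q and
   b the budget left beside it. The prefix A of a side whose cost guesses b within a factor 1 + eps'
   marks a pass whose threshold x bounds the gain of every u in Q - {o} by x c(u) plus its
   contribution to the other side, and the best one-element completion of A dominates f (A \<union> {o}).
   This yields f (Q \<union> A) <= (3 + 7 eps') f S on both sides, unless already opt <= 6 f S; so
   opt <= (6 + 14 eps') f S. Phase 1 makes O(log(1/eps)/eps) passes over V and Phase 2 tries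
   O(log(1/eps)/eps) guesses, each costing O(n) queries. *)

subsection \<open>Counting queries\<close>

lemma fst_bnd [simp]: "fst (bnd m g) = fst (g (fst m))"
  by (simp add: bnd_def split: prod.split)

lemma snd_bnd [simp]: "snd (bnd m g) = snd m + snd (g (fst m))"
  by (simp add: bnd_def split: prod.split)

lemma fst_ret [simp]: "fst (ret x) = x"
  by (simp add: ret_def)

lemma snd_ret [simp]: "snd (ret x) = 0"
  by (simp add: ret_def)

lemma fst_qry [simp]: "fst (qry f S) = f S"
  by (simp add: qry_def)

lemma snd_qry [simp]: "snd (qry f S) = 1"
  by (simp add: qry_def)

lemma fst_marg [simp]: "fst (marg f e Z) = f (insert e Z) - f Z"
  by (simp add: marg_def)

lemma snd_marg [simp]: "snd (marg f e Z) = 2"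
  by (simp add: marg_def)

lemma fst_foldM: "fst (foldM g xs s) = fold (\<lambda>x s. fst (g x s)) xs s"
  by (induction xs arbitrary: s) auto

lemma snd_foldM_le:
  "(\<And>x s. x \<in> set xs \<Longrightarrow> snd (g x s) \<le> b) \<Longrightarrow> snd (foldM g xs s) \<le> b * length xs"
  by (induction xs arbitrary: s) (fastforce intro: add_mono)+

lemma argmax_aux_max:
  assumes "bv = fst (g b)"
  shows "fst (argmax_aux g xs b bv) \<in> insert b (set xs) \<and>
         (\<forall>x\<in>insert b (set xs). fst (g x) \<le> fst (g (fst (argmax_aux g xs b bv))))"
  using assms
proof (induction xs arbitrary: b bv)
  case (Cons a xs)
  show ?case
  proof (cases "fst (g a) > bv")
    case True
    then show ?thesis using Cons.IH[of "fst (g a)" a] Cons.prems by fastforce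
  next
    case False
    then show ?thesis using Cons.IH[of bv b] Cons.prems by fastforce
  qed
qed simp

lemma argmaxM_max:
  assumes "xs \<noteq> []"
  shows "fst (argmaxM g xs) \<in> set xs" "x \<in> set xs \<Longrightarrow> fst (g x) \<le> fst (g (fst (argmaxM g xs)))"
proof -
  obtain a ys where "xs = a # ys"
    using assms by (cases xs) auto
  then show "fst (argmaxM g xs) \<in> set xs" "x \<in> set xs \<Longrightarrow> fst (g x) \<le> fst (g (fst (argmaxM g xs)))"
    using argmax_aux_max[of "fst (g a)" g a ys] by auto
qed

lemma snd_argmaxM: "(\<And>x. snd (g x) = 1) \<Longrightarrow> snd (argmaxM g xs) = length xs"
proof -
  assume "\<And>x. snd (g x) = 1"
  then have "snd (argmax_aux g xs b bv) = length xs" for xs b bv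
    by (induction xs arbitrary: b bv) auto
  with \<open>\<And>x. snd (g x) = 1\<close> show ?thesis
    by (cases xs) auto
qed

lemma cost_empty [simp]: "cost c {} = 0"
  by (simp add: cost_def)

lemma cost_insert: "finite S \<Longrightarrow> e \<notin> S \<Longrightarrow> cost c (insert e S) = c e + cost c S"
  by (simp add: cost_def)

lemma cost_nonneg: "(\<And>e. e \<in> S \<Longrightarrow> 0 \<le> c e) \<Longrightarrow> 0 \<le> cost c S"
  unfolding cost_def by (rule sum_nonneg)

lemma cost_mono: "finite T \<Longrightarrow> S \<subseteq> T \<Longrightarrow> (\<And>e. e \<in> T \<Longrightarrow> 0 \<le> c e) \<Longrightarrow> cost c S \<le> cost c T"
  unfolding cost_def by (rule sum_mono2) auto

lemma cost_insert_le: "finite S \<Longrightarrow> 0 \<le> c e \<Longrightarrow> cost c (insert e S) \<le> c e + cost c S"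
  by (cases "e \<in> S") (auto simp: insert_absorb cost_insert)

lemma opt_le:
  assumes "finite V" "0 \<le> B" "\<And>T. T \<subseteq> V \<Longrightarrow> cost c T \<le> B \<Longrightarrow> f T \<le> x"
  shows "opt f c B V \<le> x"
proof -
  have "finite {f T | T. T \<subseteq> V \<and> cost c T \<le> B}"
    using assms(1) by (simp add: setcompr_eq_image)
  moreover have "f {} \<in> {f T | T. T \<subseteq> V \<and> cost c T \<le> B}"
    using assms(2) by auto
  ultimately show ?thesis
    unfolding opt_def using assms(3) by (subst Max_le_iff) auto
qed

subsection \<open>Non-negative submodular functions\<close>

locale nonneg_submodular =
  fixes V :: "'a set" and f :: "'a set \<Rightarrow> real"
  assumes submodular: "submodular_on V f"
    and nonneg: "S \<subseteq> V \<Longrightarrow> 0 \<le> f S"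
    and f_empty: "f {} = 0"
begin

lemma submodular_ineq: "A \<subseteq> V \<Longrightarrow> B \<subseteq> V \<Longrightarrow> f (A \<union> B) + f (A \<inter> B) \<le> f A + f B"
  using submodular unfolding submodular_on_def by blast

lemma marginal_antimono:
  assumes "A \<subseteq> A'" "A' \<subseteq> V" "u \<in> V" "u \<notin> A'"
  shows "f (insert u A') - f A' \<le> f (insert u A) - f A"
proof -
  have "f (A' \<union> insert u A) + f (A' \<inter> insert u A) \<le> f A' + f (insert u A)"
    using submodular_ineq[of A' "insert u A"] assms by auto
  moreover have "A' \<union> insert u A = insert u A'" "A' \<inter> insert u A = A"
    using assms by auto
  ultimately show ?thesis by simp
qed

lemma marginal_le_singleton: "A \<subseteq> V \<Longrightarrow> u \<in> V \<Longrightarrow> u \<notin> A \<Longrightarrow> f (insert u A) - f A \<le> f {u}"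
  using marginal_antimono[of "{}" A u] f_empty by simp

lemma subadditive: "A \<subseteq> V \<Longrightarrow> B \<subseteq> V \<Longrightarrow> f (A \<union> B) \<le> f A + f B"
  using submodular_ineq[of A B] nonneg[of "A \<inter> B"] by force

lemma le_union_disjoint_pair:
  assumes "Q \<subseteq> V" "X \<subseteq> V" "Y \<subseteq> V" "X \<inter> Y = {}"
  shows "f Q \<le> f (Q \<union> X) + f (Q \<union> Y)"
proof -
  have "(Q \<union> X) \<inter> (Q \<union> Y) = Q"
    using assms by auto
  then show ?thesis
    using submodular_ineq[of "Q \<union> X" "Q \<union> Y"] nonneg[of "Q \<union> X \<union> (Q \<union> Y)"] assms by auto
qed

lemma union_le_marginal_sum:
  assumes "finite P" "P \<subseteq> V" "A \<subseteq> V"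
  shows "f (A \<union> P) \<le> f A + (\<Sum>u\<in>P - A. f (insert u A) - f A)"
  using assms
proof (induction P rule: finite_induct)
  case (insert x F)
  show ?case
  proof (cases "x \<in> A \<union> F")
    case True
    then have "A \<union> insert x F = A \<union> F" "insert x F - A = F - A"
      using insert.hyps by auto
    then show ?thesis using insert by auto
  next
    case False
    have "f (insert x (A \<union> F)) - f (A \<union> F) \<le> f (insert x A) - f A"
      using marginal_antimono[of A "A \<union> F" x] False insert.prems by auto
    moreover have "insert x F - A = insert x (F - A)"
      using False by auto
    ultimately show ?thesis
      using False insert by (simp add: sum.insert)
  qed
qed simp

lemma union_le_insert_marginal_sum:
  assumes "finite Q" "Q \<subseteq> V" "o' \<in> Q" "A \<subseteq> V"
  shows "f (Q \<union> A) \<le> f (insert o' A) + (\<Sum>u\<in>(Q - {o'}) - A. f (insert u A) - f A)"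
proof -
  have eq: "Q - insert o' A = (Q - {o'}) - A" "insert o' A \<union> Q = Q \<union> A"
    using assms by auto
  have "insert o' A \<subseteq> V"
    using assms by auto
  then have "f (insert o' A \<union> Q) \<le> f (insert o' A) + (\<Sum>u\<in>Q - insert o' A. f (insert u (insert o' A)) - f (insert o' A))"
    by (rule union_le_marginal_sum[OF assms(1,2)])
  also have "\<dots> \<le> f (insert o' A) + (\<Sum>u\<in>Q - insert o' A. f (insert u A) - f A)"
    using assms by (intro add_left_mono sum_mono marginal_antimono) auto
  finally show ?thesis
    unfolding eq .
qed

end

subsection \<open>Gains along a sequence of insertions\<close>

definition gain :: "('a set \<Rightarrow> real) \<Rightarrow> 'a \<Rightarrow> 'a list \<Rightarrow> real" where
  "gain f e L = f (insert e (set L)) - f (set L)"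

definition insertion_gain :: "('a set \<Rightarrow> real) \<Rightarrow> 'a list \<Rightarrow> 'a \<Rightarrow> real" where
  "insertion_gain f W u = (if u \<in> set W then gain f u (takeWhile (\<lambda>x. x \<noteq> u) W) else 0)"

definition every_step :: "('a list \<Rightarrow> 'a \<Rightarrow> bool) \<Rightarrow> 'a list \<Rightarrow> bool" where
  "every_step P xs \<longleftrightarrow> (\<forall>ys e zs. xs = ys @ e # zs \<longrightarrow> P ys e)"

lemma every_step_Nil [simp]: "every_step P []"
  by (simp add: every_step_def)

lemma every_step_snoc [simp]: "every_step P (xs @ [e]) \<longleftrightarrow> every_step P xs \<and> P xs e"
proof
  assume all: "every_step P (xs @ [e])"
  have "P ys a" if "xs = ys @ a # zs" for ys a zs
    using all that by (auto simp: every_step_def)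
  then show "every_step P xs \<and> P xs e"
    using all by (auto simp: every_step_def)
next
  assume h: "every_step P xs \<and> P xs e"
  show "every_step P (xs @ [e])"
    unfolding every_step_def
  proof (intro allI impI)
    fix ys a zs
    assume eq: "xs @ [e] = ys @ a # zs"
    show "P ys a"
    proof (cases zs rule: rev_exhaust)
      case Nil
      then show ?thesis using eq h by simp
    next
      case (snoc zs' b)
      then show ?thesis using eq h by (simp add: every_step_def)
    qed
  qed
qed

lemma every_step_mono:
  "every_step P xs \<Longrightarrow> (\<And>ys e zs. xs = ys @ e # zs \<Longrightarrow> P ys e \<Longrightarrow> Q ys e) \<Longrightarrow> every_step Q xs"
  by (auto simp: every_step_def)

lemma value_le_append:
  assumes "every_step (\<lambda>ys e. 0 \<le> gain f e ys) (R @ S)"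
  shows "f (set R) \<le> f (set (R @ S))"
  using assms
proof (induction S rule: rev_induct)
  case (snoc e S)
  then have "f (set R) \<le> f (set (R @ S))" "0 \<le> gain f e (R @ S)"
    by (simp_all flip: append_assoc)
  then show ?case
    by (simp add: gain_def)
qed simp

lemma insertion_gain_notin: "u \<notin> set W \<Longrightarrow> insertion_gain f W u = 0"
  by (simp add: insertion_gain_def)

lemma insertion_gain_split: "u \<notin> set ys \<Longrightarrow> insertion_gain f (ys @ u # zs) u = gain f u ys"
proof -
  assume "u \<notin> set ys"
  then have "takeWhile (\<lambda>x. x \<noteq> u) (ys @ u # zs) = ys"
    by (induction ys) auto
  then show ?thesis
    by (simp add: insertion_gain_def)
qed

lemma insertion_gain_append: "u \<in> set W \<Longrightarrow> insertion_gain f (W @ s) u = insertion_gain f W u"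
  by (simp add: insertion_gain_def takeWhile_append1)

lemma insertion_gain_snoc_other: "u \<noteq> e \<Longrightarrow> insertion_gain f (W @ [e]) u = insertion_gain f W u"
  by (cases "u \<in> set W") (auto simp: insertion_gain_append insertion_gain_notin)

lemma sum_insertion_gain: "distinct W \<Longrightarrow> (\<Sum>u\<in>set W. insertion_gain f W u) = f (set W) - f {}"
proof (induction W rule: rev_induct)
  case (snoc e W)
  then have "e \<notin> set W" "distinct W"
    by auto
  moreover have "(\<Sum>u\<in>set W. insertion_gain f (W @ [e]) u) = (\<Sum>u\<in>set W. insertion_gain f W u)"
    by (rule sum.cong) (auto simp: insertion_gain_append)
  ultimately show ?case
    using snoc.IH insertion_gain_split[of e W f "[]"] by (simp add: gain_def)
qed simp

lemma insertion_gain_nonneg: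
  assumes "every_step (\<lambda>ys e. 0 \<le> gain f e ys) W" "distinct W"
  shows "0 \<le> insertion_gain f W u"
proof (cases "u \<in> set W")
  case True
  then obtain ys zs where W: "W = ys @ u # zs"
    by (meson split_list)
  then have "insertion_gain f W u = gain f u ys"
    using assms(2) insertion_gain_split by fastforce
  then show ?thesis
    using assms(1) W by (simp add: every_step_def)
qed (simp add: insertion_gain_notin)

lemma sum_insertion_gain_le:
  assumes "every_step (\<lambda>ys e. 0 \<le> gain f e ys) W" "distinct W" "finite P"
  shows "(\<Sum>u\<in>P. insertion_gain f W u) \<le> f (set W) - f {}"
proof -
  have "(\<Sum>u\<in>P. insertion_gain f W u) = (\<Sum>u\<in>P \<inter> set W. insertion_gain f W u)"
    by (rule sum.mono_neutral_right) (auto simp: assms insertion_gain_notin)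
  also have "\<dots> \<le> (\<Sum>u\<in>set W. insertion_gain f W u)"
    by (rule sum_mono2) (auto simp: insertion_gain_nonneg assms)
  finally show ?thesis
    using sum_insertion_gain assms by metis
qed

locale budgeted = nonneg_submodular +
  fixes c :: "'a \<Rightarrow> real" and B :: real
  assumes budget_pos: "0 < B"
    and cost_pos: "e \<in> V \<Longrightarrow> 0 < c e"
    and finite_ground: "finite V"
begin

lemma cost_nonneg_on: "S \<subseteq> V \<Longrightarrow> 0 \<le> cost c S"
  by (rule cost_nonneg) (auto dest: cost_pos intro: less_imp_le)

lemma cost_mono_on: "S \<subseteq> T \<Longrightarrow> T \<subseteq> V \<Longrightarrow> cost c S \<le> cost c T"
  by (rule cost_mono) (auto intro: less_imp_le cost_pos finite_subset[OF _ finite_ground])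

lemma gain_antimono:
  "set L \<subseteq> set L' \<Longrightarrow> set L' \<subseteq> V \<Longrightarrow> u \<in> V \<Longrightarrow> u \<notin> set L' \<Longrightarrow> gain f u L' \<le> gain f u L"
  unfolding gain_def by (rule marginal_antimono) auto

end

lemma Greatest_nat_maximal:
  fixes P :: "nat \<Rightarrow> bool"
  assumes "P k" "\<And>j. P j \<Longrightarrow> j \<le> n"
  shows "P (Greatest P)" "\<not> P (Suc (Greatest P))"
proof -
  show "P (Greatest P)"
    using assms by (rule GreatestI_nat)
  show "\<not> P (Suc (Greatest P))"
    using Greatest_le_nat[of P _ n] assms(2) by fastforce
qed

lemma suffix_set_greatest:
  assumes "0 \<le> B"
  obtains j where "j \<le> length xs" "suffix_set c B xs = set (drop (length xs - j) xs)"
    "cost c (set (drop (length xs - j) xs)) \<le> B"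
    "j < length xs \<Longrightarrow> B < cost c (set (drop (length xs - Suc j) xs))"
proof -
  define P where "P = (\<lambda>j. j \<le> length xs \<and> cost c (set (drop (length xs - j) xs)) \<le> B)"
  have "P 0" "\<And>j. P j \<Longrightarrow> j \<le> length xs"
    using assms by (simp_all add: P_def)
  note maximal = Greatest_nat_maximal[where P=P, OF this]
  show ?thesis
    by (rule that[of "Greatest P"]) (use maximal in \<open>auto simp: P_def suffix_set_def\<close>)
qed

lemma prefix_set_subset: "prefix_set c b xs \<subseteq> set xs"
  unfolding prefix_set_def by (rule set_take_subset)

lemma prefix_set_greatest:
  assumes "0 \<le> b"
  obtains i where "i \<le> length xs" "prefix_set c b xs = set (take i xs)" "cost c (set (take i xs)) \<le> b"
    "i < length xs \<Longrightarrow> b < cost c (set (take (Suc i) xs))"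
proof -
  define P where "P = (\<lambda>i. i \<le> length xs \<and> cost c (set (take i xs)) \<le> b)"
  have "P 0" "\<And>i. P i \<Longrightarrow> i \<le> length xs"
    using assms by (simp_all add: P_def)
  note maximal = Greatest_nat_maximal[where P=P, OF this]
  show ?thesis
    by (rule that[of "Greatest P"]) (use maximal in \<open>auto simp: P_def prefix_set_def\<close>)
qed

lemma finite_costliest:
  fixes c :: "'a \<Rightarrow> real"
  assumes "finite Q" "Q \<noteq> {}"
  obtains omax where "omax \<in> Q" "\<And>u. u \<in> Q \<Longrightarrow> c u \<le> c omax"
proof -
  have "Max (c ` Q) \<in> c ` Q"
    using assms by simp
  then obtain omax where "omax \<in> Q" "c omax = Max (c ` Q)"
    by auto
  then show ?thesis
    using that assms by simp
qed

subsection \<open>Analysis of LA\<close>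

definition la_admits :: "('a set \<Rightarrow> real) \<Rightarrow> ('a \<Rightarrow> real) \<Rightarrow> real \<Rightarrow> 'a \<Rightarrow> 'a list \<Rightarrow> bool" where
  "la_admits f c B e L \<longleftrightarrow> c e * f (set L) / B \<le> gain f e L"

text \<open>One step of LA as a relation; it forgets how ties between the two sides are broken.\<close>

definition la_choice ::
    "('a set \<Rightarrow> real) \<Rightarrow> ('a \<Rightarrow> real) \<Rightarrow> real \<Rightarrow> 'a \<Rightarrow> 'a list \<Rightarrow> 'a list \<Rightarrow> 'a list \<Rightarrow> 'a list \<Rightarrow> bool" where
  "la_choice f c B e Z Z' W W' \<longleftrightarrow>
     (Z' = Z @ [e] \<and> W' = W \<and> la_admits f c B e Z \<and> (la_admits f c B e W \<longrightarrow> gain f e W \<le> gain f e Z)) \<or>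
     (W' = W @ [e] \<and> Z' = Z \<and> la_admits f c B e W \<and> (la_admits f c B e Z \<longrightarrow> gain f e Z \<le> gain f e W)) \<or>
     (Z' = Z \<and> W' = W \<and> \<not> la_admits f c B e Z \<and> \<not> la_admits f c B e W)"

lemma la_step_choice:
  assumes "0 < c e" "0 < B"
  shows "la_choice f c B e X (fst (fst (la_step f c B e (X, Y)))) Y (snd (fst (la_step f c B e (X, Y))))"
proof -
  define gX where "gX = gain f e X"
  define gY where "gY = gain f e Y"
  have admits: "la_admits f c B e L \<longleftrightarrow> f (set L) / B \<le> gain f e L / c e" for L
    using assms by (simp add: la_admits_def field_simps)
  have cmp: "gY / c e \<le> gX / c e \<longleftrightarrow> gY \<le> gX"
    using assms by (simp add: divide_le_cancel)
  have "fst (la_step f c B e (X, Y)) =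
     (if f (set X) / B \<le> gX / c e \<and> (\<not> f (set Y) / B \<le> gY / c e \<or> gY / c e \<le> gX / c e) then (X @ [e], Y)
      else if f (set Y) / B \<le> gY / c e then (X, Y @ [e]) else (X, Y))"
    by (simp add: la_step_def Let_def gX_def gY_def gain_def)
  then show ?thesis
    unfolding la_choice_def admits cmp gX_def[symmetric] gY_def[symmetric]
    using cmp by auto
qed

context budgeted
begin

lemma admission_threshold_nonneg: "set L \<subseteq> V \<Longrightarrow> e \<in> V \<Longrightarrow> 0 \<le> c e * f (set L) / B"
  using cost_pos[of e] nonneg[of "set L"] budget_pos by simp

lemma gain_nonneg_if_admitted:
  assumes "every_step (\<lambda>ys e. la_admits f c B e ys) Z" "set Z \<subseteq> V"
  shows "every_step (\<lambda>ys e. 0 \<le> gain f e ys) Z"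
proof (rule every_step_mono[OF assms(1)])
  fix ys e zs
  assume "Z = ys @ e # zs" "la_admits f c B e ys"
  moreover from this have "0 \<le> c e * f (set ys) / B"
    using assms(2) by (intro admission_threshold_nonneg) auto
  ultimately show "0 \<le> gain f e ys"
    by (simp add: la_admits_def)
qed

text \<open>After LA has processed the elements of \<open>D\<close>, each of them that is not in the side \<open>Z\<close>
  was rejected by \<open>Z\<close> or is paid for by what it contributed to the other side \<open>W\<close>.\<close>

definition la_side_inv :: "'a set \<Rightarrow> 'a list \<Rightarrow> 'a list \<Rightarrow> bool" where
  "la_side_inv D Z W \<longleftrightarrow> distinct Z \<and> set Z \<subseteq> D \<and> every_step (\<lambda>ys e. la_admits f c B e ys) Z \<and>
     (\<forall>u\<in>D - set Z. gain f u Z \<le> c u * f (set Z) / B + insertion_gain f W u)"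

definition la_inv :: "'a set \<Rightarrow> 'a list \<Rightarrow> 'a list \<Rightarrow> bool" where
  "la_inv D X Y \<longleftrightarrow> la_side_inv D X Y \<and> la_side_inv D Y X \<and> set X \<inter> set Y = {}"

lemma la_side_inv_append_self:
  assumes "D \<subseteq> V" "e \<in> V" "e \<notin> D" "la_side_inv D Z W" "la_admits f c B e Z"
  shows "la_side_inv (insert e D) (Z @ [e]) W"
proof -
  have Z: "distinct Z" "set Z \<subseteq> D" and bound: "\<forall>u\<in>D - set Z. gain f u Z \<le> c u * f (set Z) / B + insertion_gain f W u"
    using assms(4) by (auto simp: la_side_inv_def)
  have "0 \<le> c e * f (set Z) / B"
    using assms Z by (intro admission_threshold_nonneg) auto
  then have grows: "f (set Z) \<le> f (set (Z @ [e]))"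
    using assms(5) by (simp add: la_admits_def gain_def)
  have "gain f u (Z @ [e]) \<le> c u * f (set (Z @ [e])) / B + insertion_gain f W u"
    if u: "u \<in> D - set Z" "u \<noteq> e" for u
  proof -
    have "gain f u (Z @ [e]) \<le> gain f u Z"
      by (rule gain_antimono) (use u assms Z in auto)
    moreover have "c u * f (set Z) / B \<le> c u * f (set (Z @ [e])) / B"
      using grows cost_pos[of u] u assms(1) budget_pos by (intro divide_right_mono mult_left_mono) auto
    ultimately show ?thesis
      using bound[rule_format, OF u(1)] by linarith
  qed
  then show ?thesis
    using assms Z by (auto simp: la_side_inv_def)
qed

lemma la_side_inv_append_other:
  assumes "D \<subseteq> V" "e \<in> V" "e \<notin> D" "la_side_inv D Z W" "set W \<subseteq> D" "la_admits f c B e W"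
    and "la_admits f c B e Z \<longrightarrow> gain f e Z \<le> gain f e W"
  shows "la_side_inv (insert e D) Z (W @ [e])"
proof -
  have Z: "set Z \<subseteq> D" and bound: "\<forall>u\<in>D - set Z. gain f u Z \<le> c u * f (set Z) / B + insertion_gain f W u"
    using assms(4) by (auto simp: la_side_inv_def)
  have paid: "insertion_gain f (W @ [e]) e = gain f e W"
    using insertion_gain_split[of e W f "[]"] assms by auto
  have "0 \<le> c e * f (set L) / B" if "set L \<subseteq> D" for L
    using assms(1,2) that by (intro admission_threshold_nonneg) auto
  then have "gain f e Z \<le> c e * f (set Z) / B + gain f e W"
    using assms(5-7) Z by (force simp: la_admits_def)
  moreover have "insertion_gain f (W @ [e]) u = insertion_gain f W u" if "u \<in> D" for u
    using assms(3) that insertion_gain_snoc_other by metis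
  ultimately show ?thesis
    using assms(4) bound paid by (auto simp: la_side_inv_def)
qed

lemma la_side_inv_reject:
  assumes "la_side_inv D Z W" "e \<notin> set W" "\<not> la_admits f c B e Z"
  shows "la_side_inv (insert e D) Z W"
  using assms by (auto simp: la_side_inv_def la_admits_def insertion_gain_notin)

lemma la_inv_step:
  assumes "D \<subseteq> V" "e \<in> V" "e \<notin> D" "la_inv D X Y" "la_choice f c B e X X' Y Y'"
  shows "la_inv (insert e D) X' Y'"
proof -
  have inv: "la_side_inv D X Y" "la_side_inv D Y X" "set X \<inter> set Y = {}"
    and sub: "set X \<subseteq> D" "set Y \<subseteq> D"
    using assms(4) by (auto simp: la_inv_def la_side_inv_def)
  then have new: "e \<notin> set X" "e \<notin> set Y"
    using assms(3) by auto
  from assms(5) consider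
      (X) "X' = X @ [e]" "Y' = Y" "la_admits f c B e X" "la_admits f c B e Y \<longrightarrow> gain f e Y \<le> gain f e X"
    | (Y) "Y' = Y @ [e]" "X' = X" "la_admits f c B e Y" "la_admits f c B e X \<longrightarrow> gain f e X \<le> gain f e Y"
    | (none) "X' = X" "Y' = Y" "\<not> la_admits f c B e X" "\<not> la_admits f c B e Y"
    unfolding la_choice_def by blast
  then show ?thesis
  proof cases
    case X
    then show ?thesis
      using la_side_inv_append_self[OF assms(1-3) inv(1)] la_side_inv_append_other[OF assms(1-3) inv(2)]
        inv(3) new sub by (auto simp: la_inv_def)
  next
    case Y
    then show ?thesis
      using la_side_inv_append_self[OF assms(1-3) inv(2)] la_side_inv_append_other[OF assms(1-3) inv(1)]
        inv(3) new sub by (auto simp: la_inv_def)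
  next
    case none
    then show ?thesis
      using la_side_inv_reject inv new by (auto simp: la_inv_def)
  qed
qed

lemma la_inv_fold:
  assumes "distinct xs" "set xs \<subseteq> V" "set xs \<inter> D = {}" "D \<subseteq> V" "la_inv D X Y"
  shows "la_inv (D \<union> set xs) (fst (fold (\<lambda>e st. fst (la_step f c B e st)) xs (X, Y)))
                              (snd (fold (\<lambda>e st. fst (la_step f c B e st)) xs (X, Y)))"
  using assms
proof (induction xs arbitrary: D X Y)
  case (Cons a xs)
  obtain X' Y' where step: "fst (la_step f c B a (X, Y)) = (X', Y')"
    by fastforce
  have "la_choice f c B a X X' Y Y'"
    using la_step_choice[of c a B f X Y] cost_pos budget_pos Cons.prems step by auto
  then have "la_inv (insert a D) X' Y'"
    using la_inv_step[of D a X Y X' Y'] Cons.prems by simp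
  then show ?case
    using Cons.IH[of "insert a D" X' Y'] Cons.prems step by auto
qed simp

lemma admitted_suffix_gain:
  assumes "every_step (\<lambda>ys e. la_admits f c B e ys) (R @ S)" "distinct (R @ S)" "set (R @ S) \<subseteq> V"
  shows "cost c (set S) * f (set R) / B \<le> f (set (R @ S)) - f (set R)"
  using assms
proof (induction S rule: rev_induct)
  case (snoc e S)
  have IH: "cost c (set S) * f (set R) / B \<le> f (set (R @ S)) - f (set R)"
    and admits: "c e * f (set (R @ S)) / B \<le> gain f e (R @ S)"
    using snoc by (auto simp: la_admits_def simp flip: append_assoc)
  have "0 \<le> cost c (set S) * f (set R) / B"
    using snoc.prems(3) cost_nonneg_on nonneg budget_pos by simp
  then have "c e * f (set R) / B \<le> c e * f (set (R @ S)) / B"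
    using IH cost_pos[of e] snoc.prems(3) budget_pos by (auto intro!: divide_right_mono mult_left_mono)
  moreover have "cost c (set (S @ [e])) = c e + cost c (set S)"
    using snoc.prems(2) by (simp add: cost_insert)
  ultimately show ?case
    using IH admits by (simp add: gain_def add_divide_distrib distrib_right)
qed simp

text \<open>If the chosen suffix \<open>S\<close> is not all of \<open>T = R @ S\<close>, it costs more than \<open>B/2\<close>, and the
  admission rule makes it gain at least \<open>f R / 2\<close>.\<close>

lemma suffix_set_bound:
  assumes "every_step (\<lambda>ys e. la_admits f c B e ys) T" "distinct T" "set T \<subseteq> V"
    and small: "\<And>e. e \<in> set T \<Longrightarrow> c e \<le> B / 2"
  shows "suffix_set c B T \<subseteq> set T" "cost c (suffix_set c B T) \<le> B" "f (set T) \<le> 3 * f (suffix_set c B T)"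
proof -
  obtain j where j: "j \<le> length T" "suffix_set c B T = set (drop (length T - j) T)"
    "cost c (set (drop (length T - j) T)) \<le> B"
    "j < length T \<Longrightarrow> B < cost c (set (drop (length T - Suc j) T))"
    using suffix_set_greatest[of B T c] budget_pos by auto
  define R where "R = take (length T - j) T"
  define S where "S = drop (length T - j) T"
  have T: "T = R @ S"
    by (simp add: R_def S_def)
  show "suffix_set c B T \<subseteq> set T" "cost c (suffix_set c B T) \<le> B"
    using j by (auto dest: in_set_dropD)
  have sub: "f (set T) \<le> f (set R) + f (set S)"
    using subadditive[of "set R" "set S"] assms(3) T by auto
  have fS: "0 \<le> f (set S)"
    using assms(3) T nonneg by simp
  have "f (set R) \<le> 2 * f (set S)"
  proof (cases "j < length T")
    case False
    then have "R = []"
      using j(1) by (simp add: R_def)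
    then show ?thesis
      using fS f_empty by simp
  next
    case True
    define m where "m = length T - Suc j"
    have m: "m < length T" "Suc m = length T - j"
      using True by (auto simp: m_def)
    then have "drop m T = T ! m # S"
      by (metis S_def Cons_nth_drop_Suc)
    moreover have "distinct (drop m T)"
      using assms(2) by simp
    ultimately have "B < c (T ! m) + cost c (set S)"
      using j(4)[OF True] m by (simp add: m_def cost_insert)
    then have "B / 2 < cost c (set S)"
      using small[of "T ! m"] m(1) by simp
    moreover have "0 \<le> f (set R)"
      using assms(3) T nonneg by simp
    ultimately have "B / 2 * f (set R) \<le> cost c (set S) * f (set R)"
      by (intro mult_right_mono) auto
    then have "f (set R) / 2 \<le> cost c (set S) * f (set R) / B"
      using budget_pos by (simp add: field_simps)
    also have "\<dots> \<le> f (set T) - f (set R)"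
      using admitted_suffix_gain[of R S] assms T by simp
    finally have "f (set R) / 2 \<le> f (set T) - f (set R)" .
    then show ?thesis
      using sub by linarith
  qed
  then show "f (set T) \<le> 3 * f (suffix_set c B T)"
    using sub j(2) by (simp add: S_def)
qed

lemma sum_gain_le_singletons:
  assumes "finite P" "P \<subseteq> V" "set Z \<subseteq> V" "\<And>u. u \<in> V \<Longrightarrow> f {u} \<le> \<Gamma>" "0 \<le> \<Gamma>"
  shows "(\<Sum>u\<in>P - set Z. gain f u Z) \<le> real (card P) * \<Gamma>"
proof -
  have "(\<Sum>u\<in>P - set Z. gain f u Z) \<le> (\<Sum>u\<in>P - set Z. \<Gamma>)"
  proof (rule sum_mono)
    fix u
    assume "u \<in> P - set Z"
    then show "gain f u Z \<le> \<Gamma>"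
      using marginal_le_singleton[of "set Z" u] assms by (force simp: gain_def)
  qed
  also have "\<dots> \<le> real (card P) * \<Gamma>"
    using assms(1,5) card_mono[OF assms(1), of "P - set Z"] by (auto intro: mult_right_mono)
  finally show ?thesis .
qed

lemma sum_gain_le_la_side_inv:
  assumes "la_side_inv D Z W" "finite P" "P \<subseteq> D" "D \<subseteq> V"
    and "every_step (\<lambda>ys e. 0 \<le> gain f e ys) W" "distinct W"
  shows "(\<Sum>u\<in>P - set Z. gain f u Z) \<le> cost c P * f (set Z) / B + f (set W)"
proof -
  have bound: "\<forall>u\<in>D - set Z. gain f u Z \<le> c u * f (set Z) / B + insertion_gain f W u"
    and Z: "set Z \<subseteq> D"
    using assms(1) by (auto simp: la_side_inv_def)
  have "(\<Sum>u\<in>P - set Z. gain f u Z) \<le> (\<Sum>u\<in>P - set Z. c u * f (set Z) / B + insertion_gain f W u)"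
    using bound assms(3) by (intro sum_mono) auto
  also have "\<dots> = cost c (P - set Z) * f (set Z) / B + (\<Sum>u\<in>P - set Z. insertion_gain f W u)"
    by (simp add: sum.distrib cost_def sum_distrib_right sum_divide_distrib)
  also have "\<dots> \<le> cost c P * f (set Z) / B + f (set W)"
  proof -
    have "cost c (P - set Z) \<le> cost c P"
      using assms(3,4) by (intro cost_mono_on) auto
    then have "cost c (P - set Z) * f (set Z) / B \<le> cost c P * f (set Z) / B"
      using nonneg[of "set Z"] Z assms(4) budget_pos by (intro divide_right_mono mult_right_mono) auto
    moreover have "(\<Sum>u\<in>P - set Z. insertion_gain f W u) \<le> f (set W)"
      using sum_insertion_gain_le[OF assms(5,6)] assms(2) f_empty by simp
    ultimately show ?thesis
      by linarith
  qed
  finally show ?thesis .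
qed

text \<open>An element of \<open>Q\<close> costing more than \<open>B/2\<close> adds at most \<open>\<Gamma>\<close> but uses up half the budget;
  the cheaper ones are paid for by the invariant of LA.\<close>

lemma la_side_bound:
  assumes inv: "la_side_inv D Z W" and D: "{u\<in>V. c u \<le> B / 2} \<subseteq> D" "D \<subseteq> V"
    and W: "every_step (\<lambda>ys e. 0 \<le> gain f e ys) W" "distinct W"
    and fZ: "f (set Z) \<le> 3 * \<Gamma>" and fW: "f (set W) \<le> 3 * \<Gamma>" and single: "\<And>u. u \<in> V \<Longrightarrow> f {u} \<le> \<Gamma>"
    and Q: "Q \<subseteq> V" "cost c Q \<le> B"
  shows "f (Q \<union> set Z) \<le> 9 * \<Gamma>"
proof -
  define large where "large = {u\<in>Q. B / 2 < c u}"
  define small where "small = {u\<in>Q. c u \<le> B / 2}"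
  define k where "k = real (card large)"
  have "finite Q"
    using Q(1) finite_ground by (rule finite_subset)
  then have finite: "finite Q" "finite large" "finite small"
    by (simp_all add: large_def small_def)
  have ZV: "set Z \<subseteq> V"
    using inv D by (auto simp: la_side_inv_def)
  have fZ0: "0 \<le> f (set Z)"
    using ZV nonneg by simp
  then have "0 \<le> \<Gamma>"
    using fZ by linarith
  have split: "Q - set Z = (large - set Z) \<union> (small - set Z)"
    by (auto simp: large_def small_def)
  have "f (Q \<union> set Z) \<le> f (set Z) + (\<Sum>u\<in>Q - set Z. gain f u Z)"
    using union_le_marginal_sum[OF finite(1) Q(1) ZV] by (simp add: gain_def Un_commute)
  also have "\<dots> = f (set Z) + (\<Sum>u\<in>large - set Z. gain f u Z) + (\<Sum>u\<in>small - set Z. gain f u Z)"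
    unfolding split by (subst sum.union_disjoint) (auto simp: finite large_def small_def)
  also have "\<dots> \<le> f (set Z) + k * \<Gamma> + (cost c small * f (set Z) / B + f (set W))"
    using sum_gain_le_singletons[OF finite(2) _ ZV single \<open>0 \<le> \<Gamma>\<close>]
      sum_gain_le_la_side_inv[OF inv finite(3) _ D(2) W] Q D(1)
    by (force simp: k_def large_def small_def intro!: add_mono)
  also have "\<dots> \<le> 9 * \<Gamma>"
  proof -
    have "k * (B / 2) \<le> cost c large"
      using sum_mono[of large "\<lambda>_. B / 2" c] by (force simp: k_def cost_def large_def)
    moreover have "cost c Q = cost c large + cost c small"
      unfolding cost_def using finite by (subst sum.union_disjoint[symmetric]) (auto simp: large_def small_def intro: sum.cong)
    ultimately have "cost c small / B \<le> 1 - k / 2"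
      using Q(2) budget_pos by (simp add: field_simps)
    moreover have "0 \<le> cost c small / B"
      using Q budget_pos by (auto intro!: divide_nonneg_pos cost_nonneg_on simp: small_def)
    ultimately have "cost c small / B * f (set Z) \<le> (1 - k / 2) * (3 * \<Gamma>)"
      using fZ fZ0 by (intro mult_mono) auto
    moreover have "0 \<le> k * \<Gamma>"
      using \<open>0 \<le> \<Gamma>\<close> by (simp add: k_def)
    ultimately show ?thesis
      using fZ fW by (simp add: algebra_simps)
  qed
  finally show ?thesis .
qed

lemma LA_guarantee:
  assumes vs: "distinct vs" "set vs = V" "vs \<noteq> []" and fits: "\<And>e. e \<in> V \<Longrightarrow> c e \<le> B"
  defines "S \<equiv> fst (LA f c B vs)"
  shows "S \<subseteq> V" "cost c S \<le> B" "\<And>u. u \<in> V \<Longrightarrow> f {u} \<le> f S"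
    and "\<And>Q. Q \<subseteq> V \<Longrightarrow> cost c Q \<le> B \<Longrightarrow> f Q \<le> 18 * f S"
proof -
  define ws where "ws = filter (\<lambda>e. c e \<le> B / 2) vs"
  define st where "st = fold (\<lambda>e st. fst (la_step f c B e st)) ws ([], [])"
  define X where "X = fst st"
  define Y where "Y = snd st"
  define emax where "emax = fst (argmaxM (\<lambda>e. qry f {e}) vs)"
  define cands where "cands = [suffix_set c B X, suffix_set c B Y, {emax}]"
  have S: "S = fst (argmaxM (qry f) cands)"
    by (simp add: S_def LA_def fst_foldM cands_def X_def Y_def st_def emax_def ws_def)
  then have S_cand: "S \<in> set cands" and S_max: "\<And>T. T \<in> set cands \<Longrightarrow> f T \<le> f S"
    using argmaxM_max[where xs=cands and g="qry f"] by (auto simp: cands_def)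
  have emax: "emax \<in> V" "\<And>e. e \<in> V \<Longrightarrow> f {e} \<le> f {emax}"
    using argmaxM_max[OF vs(3), where g="\<lambda>e. qry f {e}"] vs(2) by (auto simp: emax_def)
  have ws: "set ws \<subseteq> V" "distinct ws" "{u\<in>V. c u \<le> B / 2} \<subseteq> set ws"
    using vs by (auto simp: ws_def)
  have "la_inv (set ws) X Y"
    using la_inv_fold[OF ws(2,1), of "{}" "[]" "[]"] by (simp add: st_def X_def Y_def la_inv_def la_side_inv_def)
  then have inv: "la_side_inv (set ws) X Y" "la_side_inv (set ws) Y X" "set X \<inter> set Y = {}"
    and chains: "every_step (\<lambda>ys e. la_admits f c B e ys) X" "every_step (\<lambda>ys e. la_admits f c B e ys) Y"
    and distinct: "distinct X" "distinct Y" and sub: "set X \<subseteq> set ws" "set Y \<subseteq> set ws"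
    by (auto simp: la_inv_def la_side_inv_def)
  have small: "\<And>e. e \<in> set X \<Longrightarrow> c e \<le> B / 2" "\<And>e. e \<in> set Y \<Longrightarrow> c e \<le> B / 2"
    using sub by (auto simp: ws_def)
  have XV: "set X \<subseteq> V" and YV: "set Y \<subseteq> V"
    using sub ws by auto
  note sufX = suffix_set_bound[OF chains(1) distinct(1) XV small(1)]
  note sufY = suffix_set_bound[OF chains(2) distinct(2) YV small(2)]
  have fX: "f (set X) \<le> 3 * f S" and fY: "f (set Y) \<le> 3 * f S"
    using sufX(3) sufY(3) S_max by (force simp: cands_def)+
  show single: "\<And>u. u \<in> V \<Longrightarrow> f {u} \<le> f S"
    using emax S_max[of "{emax}"] by (force simp: cands_def)
  show "S \<subseteq> V" "cost c S \<le> B"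
    using S_cand sufX sufY XV YV emax fits by (auto simp: cands_def cost_def)
  fix Q
  assume Q: "Q \<subseteq> V" "cost c Q \<le> B"
  have "f Q \<le> f (Q \<union> set X) + f (Q \<union> set Y)"
    using le_union_disjoint_pair[OF Q(1) XV YV inv(3)] .
  also have "\<dots> \<le> 9 * f S + 9 * f S"
    using la_side_bound[OF inv(1) ws(3) ws(1) gain_nonneg_if_admitted[OF chains(2) YV] distinct(2) fX fY single Q]
      la_side_bound[OF inv(2) ws(3) ws(1) gain_nonneg_if_admitted[OF chains(1) XV] distinct(1) fY fX single Q]
    by (rule add_mono)
  finally show "f Q \<le> 18 * f S"
    by simp
qed

end

subsection \<open>Phase 1 of DLA\<close>

definition p1_admits :: "('a set \<Rightarrow> real) \<Rightarrow> ('a \<Rightarrow> real) \<Rightarrow> real \<Rightarrow> real \<Rightarrow> 'a \<Rightarrow> 'a list \<Rightarrow> bool" where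
  "p1_admits f c B \<theta> e L \<longleftrightarrow> cost c (insert e (set L)) \<le> B \<and> \<theta> * c e \<le> gain f e L"

definition p1_choice ::
    "('a set \<Rightarrow> real) \<Rightarrow> ('a \<Rightarrow> real) \<Rightarrow> real \<Rightarrow> real \<Rightarrow> 'a \<Rightarrow> 'a list \<Rightarrow> 'a list \<Rightarrow> 'a list \<Rightarrow> 'a list \<Rightarrow> bool" where
  "p1_choice f c B \<theta> e Z Z' W W' \<longleftrightarrow>
    (if e \<in> set Z \<union> set W then Z' = Z \<and> W' = W else
     (Z' = Z @ [e] \<and> W' = W \<and> p1_admits f c B \<theta> e Z \<and> (p1_admits f c B \<theta> e W \<longrightarrow> gain f e W \<le> gain f e Z)) \<or>
     (W' = W @ [e] \<and> Z' = Z \<and> p1_admits f c B \<theta> e W \<and> (p1_admits f c B \<theta> e Z \<longrightarrow> gain f e Z \<le> gain f e W)) \<or>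
     (Z' = Z \<and> W' = W \<and> \<not> p1_admits f c B \<theta> e Z \<and> \<not> p1_admits f c B \<theta> e W))"

lemma p1_choice_swap: "p1_choice f c B \<theta> e Z Z' W W' \<Longrightarrow> p1_choice f c B \<theta> e W W' Z Z'"
  unfolding p1_choice_def by (auto split: if_splits)

lemma p1_step_choice:
  assumes "0 < c e"
  shows "p1_choice f c B \<theta> e X (fst (fst (p1_step f c B \<theta> e (X, Y)))) Y (snd (fst (p1_step f c B \<theta> e (X, Y))))"
proof (cases "e \<in> set X \<union> set Y")
  case True
  then show ?thesis
    by (simp add: p1_step_def p1_choice_def)
next
  case False
  define gX where "gX = gain f e X"
  define gY where "gY = gain f e Y"
  have admits: "p1_admits f c B \<theta> e L \<longleftrightarrow> cost c (insert e (set L)) \<le> B \<and> \<theta> \<le> gain f e L / c e" for L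
    using assms by (simp add: p1_admits_def pos_le_divide_eq)
  have cmp: "gY / c e \<le> gX / c e \<longleftrightarrow> gY \<le> gX"
    using assms by (simp add: divide_le_cancel)
  have "fst (p1_step f c B \<theta> e (X, Y)) =
     (if (cost c (insert e (set X)) \<le> B \<and> \<theta> \<le> gX / c e) \<and>
         (\<not> (cost c (insert e (set Y)) \<le> B \<and> \<theta> \<le> gY / c e) \<or> gY / c e \<le> gX / c e) then (X @ [e], Y)
      else if cost c (insert e (set Y)) \<le> B \<and> \<theta> \<le> gY / c e then (X, Y @ [e]) else (X, Y))"
    using False by (simp add: p1_step_def Let_def gX_def gY_def gain_def)
  then show ?thesis
    unfolding p1_choice_def admits gX_def[symmetric] gY_def[symmetric]
    using cmp False by auto
qed

text \<open>A run of Phase 1, indexed by the number \<open>t\<close> of elements offered so far: the \<open>t\<close>-th offer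
  is element \<open>t mod n\<close> of \<open>vs\<close> in pass \<open>t div n\<close>, with threshold \<open>\<theta> (t div n)\<close>.\<close>

locale phase1_run = budgeted V f c B for V f c B +
  fixes vs :: "'a list" and \<theta> :: "nat \<Rightarrow> real" and Z W :: "nat \<Rightarrow> 'a list"
  assumes distinct_vs: "distinct vs" and set_vs: "set vs = V" and vs_nonempty: "vs \<noteq> []"
    and threshold_nonneg: "0 \<le> \<theta> k" and threshold_decreasing: "\<theta> (Suc k) \<le> \<theta> k"
    and Z_0: "Z 0 = []" and W_0: "W 0 = []"
    and run_step: "p1_choice f c B (\<theta> (t div length vs)) (vs ! (t mod length vs)) (Z t) (Z (Suc t)) (W t) (W (Suc t))"
begin

abbreviation "n \<equiv> length vs"

lemma swap: "phase1_run V f c B vs \<theta> W Z"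
  using p1_choice_swap[OF run_step]
  by unfold_locales (use distinct_vs set_vs vs_nonempty threshold_nonneg threshold_decreasing W_0 Z_0 in auto)

lemma offered_in_ground: "vs ! (t mod n) \<in> V"
  using vs_nonempty set_vs by auto

lemma threshold_antimono: "k \<le> k' \<Longrightarrow> \<theta> k' \<le> \<theta> k"
  using lift_Suc_antimono_le[of \<theta>] threshold_decreasing by blast

lemma run_step_cases:
  fixes t
  defines "e \<equiv> vs ! (t mod n)" and "th \<equiv> \<theta> (t div n)"
  obtains (skip) "e \<in> set (Z t) \<union> set (W t)" "Z (Suc t) = Z t" "W (Suc t) = W t"
  | (add_Z) "e \<notin> set (Z t) \<union> set (W t)" "Z (Suc t) = Z t @ [e]" "W (Suc t) = W t"
      "p1_admits f c B th e (Z t)" "p1_admits f c B th e (W t) \<longrightarrow> gain f e (W t) \<le> gain f e (Z t)"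
  | (add_W) "e \<notin> set (Z t) \<union> set (W t)" "W (Suc t) = W t @ [e]" "Z (Suc t) = Z t"
      "p1_admits f c B th e (W t)" "p1_admits f c B th e (Z t) \<longrightarrow> gain f e (Z t) \<le> gain f e (W t)"
  | (reject) "e \<notin> set (Z t) \<union> set (W t)" "Z (Suc t) = Z t" "W (Suc t) = W t"
      "\<not> p1_admits f c B th e (Z t)" "\<not> p1_admits f c B th e (W t)"
  using run_step[of t] that unfolding e_def th_def p1_choice_def by (auto split: if_splits)

lemma prefix_of_later: "t \<le> t' \<Longrightarrow> \<exists>s. Z t' = Z t @ s"
proof (induction t' rule: dec_induct)
  case (step m)
  then obtain s where "Z m = Z t @ s"
    by blast
  then show ?case
    by (cases m rule: run_step_cases) auto
qed simp

lemma sides_disjoint: "set (Z t) \<inter> set (W t) = {}"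
  by (induction t) (cases _ rule: run_step_cases; auto simp: Z_0 W_0)+

lemma side_invariant:
  "distinct (Z t) \<and> set (Z t) \<subseteq> V \<and> cost c (set (Z t)) \<le> B \<and>
   every_step (\<lambda>ys e. 0 \<le> gain f e ys) (Z t) \<and> \<theta> (t div n) * cost c (set (Z t)) \<le> f (set (Z t))"
proof (induction t)
  case 0
  then show ?case
    using budget_pos by (simp add: Z_0 f_empty)
next
  case (Suc t)
  define e where "e = vs ! (t mod n)"
  define th where "th = \<theta> (t div n)"
  have smaller: "\<theta> (Suc t div n) \<le> th"
    unfolding th_def by (rule threshold_antimono) (simp add: div_le_mono)
  have IH: "th * cost c (set (Z t)) \<le> f (set (Z t))"
    using Suc.IH by (simp add: th_def)
  have "\<theta> (Suc t div n) * cost c (set (Z t)) \<le> th * cost c (set (Z t))"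
    using smaller Suc.IH cost_nonneg_on by (intro mult_right_mono) auto
  then have unchanged: "\<theta> (Suc t div n) * cost c (set (Z t)) \<le> f (set (Z t))"
    using IH by linarith
  show ?case
  proof (cases t rule: run_step_cases)
    case add_Z
    then have admits: "cost c (insert e (set (Z t))) \<le> B" "th * c e \<le> gain f e (Z t)"
      by (auto simp: p1_admits_def e_def th_def)
    have e: "e \<in> V" "e \<notin> set (Z t)"
      using offered_in_ground add_Z by (auto simp: e_def)
    then have "0 \<le> th * c e"
      using threshold_nonneg cost_pos by (simp add: th_def less_imp_le)
    then have "0 \<le> gain f e (Z t)"
      using admits by linarith
    moreover have "\<theta> (Suc t div n) * cost c (set (Z t @ [e])) \<le> f (set (Z t @ [e]))"
    proof -
      have "cost c (set (Z t @ [e])) = c e + cost c (set (Z t))"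
        using e by (simp add: cost_insert)
      moreover have "0 \<le> c e + cost c (set (Z t))"
        using e Suc.IH cost_pos[of e] cost_nonneg_on by (simp add: add_nonneg_nonneg less_imp_le)
      ultimately have "\<theta> (Suc t div n) * cost c (set (Z t @ [e])) \<le> th * (c e + cost c (set (Z t)))"
        using smaller by (simp add: mult_right_mono)
      then show ?thesis
        using admits IH by (simp add: gain_def distrib_left)
    qed
    ultimately show ?thesis
      using Suc.IH add_Z e admits by (simp add: e_def)
  qed (use Suc.IH unchanged in auto)
qed

lemma added_at:
  assumes "u \<in> set (Z t)"
  obtains t' where "t' < t" "vs ! (t' mod n) = u" "u \<notin> set (Z t') \<union> set (W t')"
    "Z (Suc t') = Z t' @ [u]" "p1_admits f c B (\<theta> (t' div n)) u (Z t')"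
    "p1_admits f c B (\<theta> (t' div n)) u (W t') \<longrightarrow> gain f u (W t') \<le> gain f u (Z t')"
proof -
  have "\<exists>t'<t. vs ! (t' mod n) = u \<and> u \<notin> set (Z t') \<union> set (W t') \<and>
     Z (Suc t') = Z t' @ [u] \<and> p1_admits f c B (\<theta> (t' div n)) u (Z t') \<and>
     (p1_admits f c B (\<theta> (t' div n)) u (W t') \<longrightarrow> gain f u (W t') \<le> gain f u (Z t'))"
    using assms
  proof (induction t)
    case (Suc t)
    show ?case
    proof (cases "u \<in> set (Z t)")
      case True
      then show ?thesis
        using Suc.IH less_SucI by blast
    next
      case False
      then show ?thesis
      proof (cases t rule: run_step_cases)
        case add_Z
        then show ?thesis
          using False Suc.prems by auto
      qed (use False Suc.prems in auto)
    qed
  qed (simp add: Z_0)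
  then show ?thesis
    using that by blast
qed

lemma earlier_gain_ge:
  assumes "t \<le> t'" "u \<in> V" "u \<notin> set (Z t')" "cost c (set (Z t')) + c u \<le> B"
  shows "gain f u (Z t') \<le> gain f u (Z t)" "cost c (insert u (set (Z t))) \<le> B"
proof -
  obtain s where s: "Z t' = Z t @ s"
    using prefix_of_later[OF assms(1)] by blast
  then have sub: "set (Z t) \<subseteq> set (Z t')" "u \<notin> set (Z t)"
    using assms(3) by auto
  show "gain f u (Z t') \<le> gain f u (Z t)"
    using gain_antimono sub side_invariant[of t'] assms(2,3) by blast
  have "cost c (set (Z t)) \<le> cost c (set (Z t'))"
    using sub side_invariant[of t'] by (intro cost_mono_on) auto
  then show "cost c (insert u (set (Z t))) \<le> B"
    using assms(4) sub by (simp add: cost_insert)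
qed

text \<open>In pass \<open>k\<close> the element \<open>u\<close> was offered to both sides: either its density for \<open>Z\<close> was
  below \<open>\<theta> k\<close>, or it went to \<open>W\<close>, where it gained at least as much as it would have in \<open>Z\<close>.\<close>

lemma gain_le_threshold_plus_other:
  assumes "Suc k * n \<le> t'" "u \<in> V" "u \<notin> set (Z t')" "cost c (set (Z t')) + c u \<le> B"
  shows "gain f u (Z t') \<le> \<theta> k * c u + insertion_gain f (W t') u"
proof -
  interpret other: phase1_run V f c B vs \<theta> W Z
    by (rule swap)
  obtain i where i: "i < n" "vs ! i = u"
    using assms(2) set_vs by (metis in_set_conv_nth)
  define t where "t = k * n + i"
  have t: "t mod n = i" "t div n = k" "Suc t \<le> t'"
    using i assms(1) by (auto simp: t_def div_add1_eq)
  have W: "distinct (W t')" "every_step (\<lambda>ys e. 0 \<le> gain f e ys) (W t')"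
    using other.side_invariant[of t'] by auto
  have nonneg: "0 \<le> insertion_gain f (W t') u" "0 \<le> \<theta> k * c u"
    using insertion_gain_nonneg[OF W(2,1)] threshold_nonneg cost_pos[OF assms(2)] by (auto simp: less_imp_le)
  consider "u \<in> set (Z (Suc t))" | "u \<in> set (W (Suc t))" | "u \<notin> set (Z (Suc t)) \<union> set (W (Suc t))"
    by blast
  then show ?thesis
  proof cases
    case 1
    then show ?thesis
      using prefix_of_later[of "Suc t" t'] t(3) assms(3) by auto
  next
    case 2
    then obtain t2 where t2: "t2 < Suc t" "u \<notin> set (W t2) \<union> set (Z t2)" "W (Suc t2) = W t2 @ [u]"
      "p1_admits f c B (\<theta> (t2 div n)) u (W t2)"
      "p1_admits f c B (\<theta> (t2 div n)) u (Z t2) \<longrightarrow> gain f u (Z t2) \<le> gain f u (W t2)"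
      by (rule other.added_at)
    have earlier: "gain f u (Z t') \<le> gain f u (Z t2)" "cost c (insert u (set (Z t2))) \<le> B"
      using earlier_gain_ge[of t2 t'] t2(1) t(3) assms(2-4) by auto
    have "gain f u (Z t2) \<le> gain f u (W t2)"
      using t2(4,5) earlier(2) by (force simp: p1_admits_def)
    moreover have "insertion_gain f (W t') u = gain f u (W t2)"
      using other.prefix_of_later[of "Suc t2" t'] t2 t(3)
      by (auto simp: insertion_gain_split)
    ultimately show ?thesis
      using earlier nonneg by linarith
  next
    case 3
    then have "\<not> p1_admits f c B (\<theta> k) u (Z t)"
      using i t by (cases t rule: run_step_cases) auto
    moreover have "gain f u (Z t') \<le> gain f u (Z t)" "cost c (insert u (set (Z t))) \<le> B"
      using earlier_gain_ge[of t t'] t(3) assms(2-4) by auto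
    ultimately show ?thesis
      using nonneg by (auto simp: p1_admits_def)
  qed
qed

lemma sum_gain_le_threshold:
  assumes "Suc k * n \<le> t" "finite P" "P \<subseteq> V" "\<And>u. u \<in> P \<Longrightarrow> cost c (set (Z t)) + c u \<le> B"
  shows "(\<Sum>u\<in>P - set (Z t). gain f u (Z t)) \<le> \<theta> k * cost c P + f (set (W t))"
proof -
  interpret other: phase1_run V f c B vs \<theta> W Z
    by (rule swap)
  have W: "distinct (W t)" "every_step (\<lambda>ys e. 0 \<le> gain f e ys) (W t)"
    using other.side_invariant[of t] by auto
  have "(\<Sum>u\<in>P - set (Z t). gain f u (Z t)) \<le> (\<Sum>u\<in>P - set (Z t). \<theta> k * c u + insertion_gain f (W t) u)"
    using gain_le_threshold_plus_other assms by (intro sum_mono) auto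
  also have "\<dots> = \<theta> k * cost c (P - set (Z t)) + (\<Sum>u\<in>P - set (Z t). insertion_gain f (W t) u)"
    by (simp add: sum.distrib cost_def sum_distrib_left)
  also have "\<dots> \<le> \<theta> k * cost c P + f (set (W t))"
  proof -
    have "\<theta> k * cost c (P - set (Z t)) \<le> \<theta> k * cost c P"
      using assms(3) threshold_nonneg by (intro mult_left_mono cost_mono_on) auto
    moreover have "(\<Sum>u\<in>P - set (Z t). insertion_gain f (W t) u) \<le> f (set (W t))"
      using sum_insertion_gain_le[OF W(2,1)] assms(2) f_empty by simp
    ultimately show ?thesis
      by linarith
  qed
  finally show ?thesis .
qed

lemma value_mono: "t \<le> t' \<Longrightarrow> f (set (Z t)) \<le> f (set (Z t'))"
  using prefix_of_later side_invariant value_le_append by metis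

lemma prefix_admitted_at:
  assumes "i < length (Z t)"
  obtains t' where "t' < t" "Z t' = take i (Z t)"
    "\<theta> (t' div n) * cost c (set (take (Suc i) (Z t))) \<le> f (set (take (Suc i) (Z t)))"
proof -
  define u where "u = Z t ! i"
  obtain t' where t': "t' < t" "u \<notin> set (Z t') \<union> set (W t')" "Z (Suc t') = Z t' @ [u]"
    "p1_admits f c B (\<theta> (t' div n)) u (Z t')"
    using added_at[of u t] assms by (auto simp: u_def)
  obtain s where "Z t = Z (Suc t') @ s"
    using prefix_of_later[of "Suc t'" t] t'(1) by auto
  then have Zt: "Z t = Z t' @ u # s"
    using t'(3) by simp
  have "length (Z t') < length (Z t)" "Z t ! length (Z t') = Z t ! i"
    unfolding u_def[symmetric] using Zt by simp_all
  then have "length (Z t') = i"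
    using side_invariant[of t] assms nth_eq_iff_index_eq[of "Z t" "length (Z t')" i] by simp
  then have "take i (Z t) = Z t'" "take (Suc i) (Z t) = Z t' @ [u]"
    using Zt by simp_all
  moreover have "\<theta> (t' div n) * cost c (set (Z t' @ [u])) \<le> f (set (Z t' @ [u]))"
    using side_invariant[of t'] t'(2,4) by (simp add: cost_insert distrib_left p1_admits_def gain_def)
  ultimately show ?thesis
    using that t'(1) by simp
qed

end

lemma threshold_mass_le:
  fixes e x F b q :: real
  assumes "0 < e" "e \<le> 1/14" "0 \<le> x" "0 \<le> F" "x * (1 - e) * b \<le> (1 + e) * F" "0 \<le> q" "q \<le> b"
  shows "x * q \<le> (1 + 7 * e) * F"
proof -
  have "0 \<le> e * (5 - 7 * e) * F"
    using assms by simp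
  moreover have "(1 + 7 * e) * (1 - e) * F - (1 + e) * F = e * (5 - 7 * e) * F"
    by (simp add: algebra_simps)
  ultimately have "(x * b) * (1 - e) \<le> ((1 + 7 * e) * F) * (1 - e)"
    using assms(5) by (simp add: algebra_simps)
  then have "x * b \<le> (1 + 7 * e) * F"
    using assms(1,2) by (simp add: mult_le_cancel_right_pos)
  moreover have "x * q \<le> x * b"
    using assms by (simp add: mult_left_mono)
  ultimately show ?thesis
    by linarith
qed

lemma threshold_mass_le_small:
  fixes e x F B q :: real
  assumes "0 < e" "e \<le> 1/14" "0 \<le> x" "0 \<le> F" "0 < B"
    and "x * (1 - e) * ((1 - e) * B) \<le> (1 + e) * F" "0 \<le> q" "q \<le> e * B"
  shows "x * q \<le> 7 * e * F"
proof -
  have "0 \<le> 6 - 15 * e + 7 * (e * e)"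
    using assms zero_le_square[of e] by linarith
  then have "0 \<le> (6 - 15 * e + 7 * (e * e)) * F"
    using assms by simp
  moreover have "7 * ((1 - e) * (1 - e)) * F - (1 + e) * F = (6 - 15 * e + 7 * (e * e)) * F"
    by (simp add: algebra_simps)
  ultimately have "(x * B) * ((1 - e) * (1 - e)) \<le> (7 * F) * ((1 - e) * (1 - e))"
    using assms(6) by (simp add: algebra_simps)
  then have "x * B \<le> 7 * F"
    using assms(1,2) by (simp add: mult_le_cancel_right_pos)
  then have "e * (x * B) \<le> e * (7 * F)"
    using assms(1) by (simp add: mult_left_mono)
  moreover have "x * q \<le> x * (e * B)"
    using assms by (simp add: mult_left_mono)
  ultimately show ?thesis
    by (simp add: algebra_simps)
qed

subsection \<open>Phase 2 of DLA\<close>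

text \<open>One side \<open>Z\<close> of a completed Phase 1 of \<open>K\<close> passes, compared with a feasible set \<open>Q\<close> whose
  costliest element is \<open>omax\<close>. The budget \<open>b\<close> left for \<open>Q - {omax}\<close> (capped at \<open>(1 - \<epsilon>') B\<close>)
  is guessed from below within a factor \<open>1 + \<epsilon>'\<close> by \<open>\<beta>\<close>, and \<open>F\<close> dominates all candidates of DLA.\<close>

locale phase2_side = phase1_run V f c B vs \<theta> Z W for V f c B vs \<theta> Z W +
  fixes \<epsilon>' \<Gamma> F :: real and K :: nat and Q :: "'a set" and omax :: 'a and b \<beta> :: real
  assumes eps: "0 < \<epsilon>'" "\<epsilon>' \<le> 1/14"
    and threshold_ratio: "\<theta> (Suc k) = (1 - \<epsilon>') * \<theta> k"
    and threshold_start: "\<theta> 0 * (\<epsilon>' * B) = 19 * \<Gamma> / 6"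
    and Gamma_pos: "0 < \<Gamma>"
    and passes: "1 \<le> K" "\<theta> (K - 1) < \<Gamma> / (6 * B)"
    and Gamma_le: "\<Gamma> \<le> F" and opt_le: "f Q \<le> 19 * \<Gamma>" and single_le: "f {omax} \<le> \<Gamma>"
    and other_le: "f (set (W (K * length vs))) \<le> F"
    and completion_le: "\<And>e. e \<in> V \<Longrightarrow> cost c (insert e (prefix_set c \<beta> (Z (K * length vs)))) \<le> B
        \<Longrightarrow> f (insert e (prefix_set c \<beta> (Z (K * length vs)))) \<le> F"
    and Q: "Q \<subseteq> V" "omax \<in> Q" "cost c Q \<le> B" "\<And>u. u \<in> Q \<Longrightarrow> c u \<le> c omax"
    and guess: "\<epsilon>' * B \<le> \<beta>" "\<beta> \<le> b" "b < \<beta> * (1 + \<epsilon>')"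
    and rest: "(c omax \<le> (1 - \<epsilon>') * B \<and> b = B - c omax) \<or> ((1 - \<epsilon>') * B < c omax \<and> b = (1 - \<epsilon>') * B)"
begin

abbreviation "A \<equiv> prefix_set c \<beta> (Z (K * n))"

abbreviation "q \<equiv> cost c (Q - {omax})"

lemma Q_finite: "finite Q"
  using Q(1) finite_ground by (rule finite_subset)

lemma cost_Q: "cost c Q = c omax + q"
  using Q_finite Q(2) cost_insert[of "Q - {omax}" omax c] by (simp add: insert_absorb)

lemma q_nonneg: "0 \<le> q"
  using Q(1) by (intro cost_nonneg_on) auto

lemma prefix_props:
  obtains i where "i \<le> length (Z (K * n))" "A = set (take i (Z (K * n)))" "cost c A \<le> b"
    "i < length (Z (K * n)) \<Longrightarrow> \<beta> < cost c (set (take (Suc i) (Z (K * n))))"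
proof -
  have "0 \<le> \<beta>"
    using guess(1) mult_pos_pos[OF eps(1) budget_pos] by simp
  obtain i where "i \<le> length (Z (K * n))" "A = set (take i (Z (K * n)))"
    "cost c (set (take i (Z (K * n)))) \<le> \<beta>"
    "i < length (Z (K * n)) \<Longrightarrow> \<beta> < cost c (set (take (Suc i) (Z (K * n))))"
    using prefix_set_greatest[OF \<open>0 \<le> \<beta>\<close>, where xs="Z (K * n)" and c=c] by blast
  then show ?thesis
    using that guess(2) by simp
qed

lemma cost_prefix_le: "cost c A \<le> b"
  using prefix_props by metis

lemma b_lt_budget: "b < B"
  using rest cost_pos[of omax] Q(1,2) mult_pos_pos[OF eps(1) budget_pos] by (auto simp: algebra_simps)

lemma prefix_subset: "A \<subseteq> V"
  using side_invariant[of "K * n"] prefix_set_subset[of c \<beta> "Z (K * n)"] by blast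

lemma cost_prefix_plus_le: "u \<in> Q - {omax} \<Longrightarrow> cost c A + c u \<le> B"
proof -
  assume u: "u \<in> Q - {omax}"
  have "c u \<le> q"
    using u Q(1) Q_finite cost_pos unfolding cost_def
    by (intro member_le_sum) (auto intro: less_imp_le)
  then show ?thesis
    using cost_prefix_le rest cost_Q Q(3) Q(4)[of u] u eps budget_pos by (auto simp: algebra_simps)
qed

lemma prefix_value_le: "f A \<le> F"
proof (cases "A = {}")
  case True
  then show ?thesis
    using f_empty Gamma_pos Gamma_le by simp
next
  case False
  then obtain e where e: "e \<in> A"
    by blast
  have "cost c A \<le> B"
    using cost_prefix_le b_lt_budget by simp
  then show ?thesis
    using completion_le[of e] e prefix_subset by (auto simp: insert_absorb)
qed

lemma insert_omax_le:
  "f (insert omax A) \<le> 2 * F" "c omax \<le> (1 - \<epsilon>') * B \<Longrightarrow> f (insert omax A) \<le> F"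
proof -
  show "f (insert omax A) \<le> 2 * F"
    using subadditive[of A "{omax}"] prefix_subset Q(1,2) prefix_value_le single_le Gamma_le by auto
  assume "c omax \<le> (1 - \<epsilon>') * B"
  moreover have "cost c (insert omax A) \<le> c omax + cost c A"
    using prefix_subset finite_ground cost_pos[of omax] Q by (intro cost_insert_le) (auto intro: finite_subset)
  ultimately have "cost c (insert omax A) \<le> B"
    using cost_prefix_le rest by auto
  then show "f (insert omax A) \<le> F"
    using completion_le Q by auto
qed

lemma union_prefix_le:
  "A = set (Z t) \<Longrightarrow> f (Q \<union> A) \<le> f (insert omax A) + (\<Sum>u\<in>(Q - {omax}) - set (Z t). gain f u (Z t))"
  using union_le_insert_marginal_sum[OF Q_finite Q(1,2) prefix_subset] by (simp add: gain_def)

lemma union_prefix_le_threshold: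
  assumes "A = set (Z t)" "Suc k * n \<le> t" "t \<le> K * n"
  shows "f (Q \<union> A) \<le> f (insert omax A) + \<theta> k * q + F"
proof -
  interpret other: phase1_run V f c B vs \<theta> W Z
    by (rule swap)
  have "(\<Sum>u\<in>(Q - {omax}) - set (Z t). gain f u (Z t)) \<le> \<theta> k * q + f (set (W t))"
    using Q_finite Q(1) cost_prefix_plus_le assms(1) by (intro sum_gain_le_threshold[OF assms(2)]) auto
  moreover have "f (set (W t)) \<le> F"
    using other.value_mono[OF assms(3)] other_le by simp
  ultimately show ?thesis
    using union_prefix_le[OF assms(1)] by simp
qed

lemma scaled_threshold_le:
  assumes "x \<le> \<Gamma> / (6 * B)" "0 \<le> x"
  shows "x * (1 - \<epsilon>') * b \<le> (1 + \<epsilon>') * F"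
proof -
  have "x * (1 - \<epsilon>') \<le> x"
    using assms(2) eps(1) by (simp add: right_diff_distrib)
  moreover have "0 \<le> b"
    using guess(1,2) mult_pos_pos[OF eps(1) budget_pos] by simp
  ultimately have "x * (1 - \<epsilon>') * b \<le> x * B"
    using b_lt_budget assms(2) by (intro mult_mono) auto
  also have "\<dots> \<le> \<Gamma> / 6"
    using assms(1) budget_pos by (simp add: field_simps)
  also have "\<dots> \<le> F"
    using Gamma_pos Gamma_le by simp
  also have "\<dots> \<le> (1 + \<epsilon>') * F"
    using eps(1) Gamma_pos Gamma_le by (simp add: distrib_right)
  finally show ?thesis .
qed

text \<open>The element following a proper prefix \<open>A\<close> completes \<open>A\<close> within budget, and it was added
  with a density of at least the threshold current at that time.\<close>

lemma proper_prefix_reached: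
  assumes "i < length (Z (K * n))" "A = set (take i (Z (K * n)))"
    and "i < length (Z (K * n)) \<Longrightarrow> \<beta> < cost c (set (take (Suc i) (Z (K * n))))"
  obtains t where "t < K * n" "Z t = take i (Z (K * n))" "\<theta> (t div n) * \<beta> \<le> F"
proof -
  obtain t where t: "t < K * n" "Z t = take i (Z (K * n))"
    "\<theta> (t div n) * cost c (set (take (Suc i) (Z (K * n)))) \<le> f (set (take (Suc i) (Z (K * n))))"
    using assms(1) by (rule prefix_admitted_at)
  have Z: "set (Z (K * n)) \<subseteq> V" "cost c (set (Z (K * n))) \<le> B"
    using side_invariant[of "K * n"] by simp_all
  have next_elem: "set (take (Suc i) (Z (K * n))) = insert (Z (K * n) ! i) A" "Z (K * n) ! i \<in> V"
    using assms(1,2) Z(1) by (simp_all add: take_Suc_conv_app_nth subset_iff)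
  have "cost c (set (take (Suc i) (Z (K * n)))) \<le> cost c (set (Z (K * n)))"
    using Z(1) set_take_subset by (rule cost_mono_on[rotated])
  then have "f (set (take (Suc i) (Z (K * n)))) \<le> F"
    using completion_le[OF next_elem(2)] next_elem(1) Z(2) by simp
  moreover have "\<theta> (t div n) * \<beta> \<le> \<theta> (t div n) * cost c (set (take (Suc i) (Z (K * n))))"
    using assms(3)[OF assms(1)] threshold_nonneg by (intro mult_left_mono) auto
  ultimately have "\<theta> (t div n) * \<beta> \<le> F"
    using t(3) by linarith
  then show ?thesis
    using that t(1,2) by blast
qed

text \<open>Either some threshold \<open>x\<close> of Phase 1 bounds the marginal gains of \<open>Q - {omax}\<close> with
  respect to the prefix \<open>A\<close> while being small compared to \<open>F / b\<close>, or already the first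
  threshold was met by an element extending \<open>A\<close>, which makes \<open>F\<close> large.\<close>

lemma threshold_for_prefix:
  obtains x where "0 \<le> x" "x * (1 - \<epsilon>') * b \<le> (1 + \<epsilon>') * F" "f (Q \<union> A) \<le> f (insert omax A) + x * q + F"
  | "f Q \<le> 6 * F"
proof -
  obtain i where i: "i \<le> length (Z (K * n))" "A = set (take i (Z (K * n)))"
    "i < length (Z (K * n)) \<Longrightarrow> \<beta> < cost c (set (take (Suc i) (Z (K * n))))"
    using prefix_props by metis
  show ?thesis
  proof (cases "i = length (Z (K * n))")
    case True
    then have "f (Q \<union> A) \<le> f (insert omax A) + \<theta> (K - 1) * q + F"
      using i(2) passes(1) by (intro union_prefix_le_threshold) auto
    then show ?thesis
      using that(1) scaled_threshold_le[OF less_imp_le[OF passes(2)]] threshold_nonneg by blast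
  next
    case False
    then have i_less: "i < length (Z (K * n))"
      using i(1) by simp
    then obtain t where t: "t < K * n" "Z t = take i (Z (K * n))" and reached: "\<theta> (t div n) * \<beta> \<le> F"
      using i(2,3) by (rule proper_prefix_reached)
    show ?thesis
    proof (cases "t div n")
      case 0
      have "\<theta> 0 * (\<epsilon>' * B) \<le> \<theta> 0 * \<beta>"
        using guess(1) threshold_nonneg by (rule mult_left_mono)
      then show ?thesis
        using that(2) reached 0 opt_le threshold_start by simp
    next
      case (Suc k)
      then have "Suc k * n \<le> t"
        using div_times_less_eq_dividend[of t n] by simp
      then have "f (Q \<union> A) \<le> f (insert omax A) + \<theta> k * q + F"
        using i(2) t(1,2) by (intro union_prefix_le_threshold) auto
      moreover have "\<theta> k * (1 - \<epsilon>') * b \<le> (1 + \<epsilon>') * F"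
      proof -
        have "\<theta> k * (1 - \<epsilon>') * b = \<theta> (t div n) * b"
          unfolding Suc threshold_ratio by (simp add: ac_simps)
        also have "\<dots> \<le> \<theta> (t div n) * (\<beta> * (1 + \<epsilon>'))"
          using guess(3) threshold_nonneg by (intro mult_left_mono) auto
        also have "\<dots> = (\<theta> (t div n) * \<beta>) * (1 + \<epsilon>')"
          by (simp add: algebra_simps)
        also have "\<dots> \<le> F * (1 + \<epsilon>')"
          using reached eps(1) by (intro mult_right_mono) auto
        finally show ?thesis
          by (simp add: mult.commute)
      qed
      ultimately show ?thesis
        using that(1) threshold_nonneg by blast
    qed
  qed
qed

lemma union_prefix_bound: "f (Q \<union> A) \<le> (3 + 7 * \<epsilon>') * F \<or> f Q \<le> 6 * F"
proof (cases rule: threshold_for_prefix)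
  case (1 x)
  have F: "0 \<le> F" "0 \<le> \<epsilon>' * F"
    using Gamma_pos Gamma_le eps by simp_all
  from rest show ?thesis
  proof
    assume small: "c omax \<le> (1 - \<epsilon>') * B \<and> b = B - c omax"
    then have "x * q \<le> (1 + 7 * \<epsilon>') * F"
      using threshold_mass_le[OF eps 1(1) F(1) 1(2) q_nonneg] cost_Q Q(3) by simp
    then show ?thesis
      using 1(3) insert_omax_le(2) small by (simp add: algebra_simps)
  next
    assume large: "(1 - \<epsilon>') * B < c omax \<and> b = (1 - \<epsilon>') * B"
    have "x * (1 - \<epsilon>') * ((1 - \<epsilon>') * B) \<le> (1 + \<epsilon>') * F"
      using 1(2) large by simp
    moreover have "q \<le> \<epsilon>' * B"
      using large cost_Q Q(3) by (simp add: algebra_simps)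
    ultimately have "x * q \<le> 7 * \<epsilon>' * F"
      using threshold_mass_le_small[OF eps 1(1) F(1) budget_pos _ q_nonneg] by simp
    then show ?thesis
      using 1(3) insert_omax_le(1) by (simp add: algebra_simps)
  qed
qed simp

end

lemma ln_2_le: "ln (2::real) \<le> 13/14"
proof -
  have "1 + 13/28 \<le> exp (13/28::real)"
    by (rule exp_ge_add_one_self)
  then have "(1 + 13/28) * (1 + 13/28) \<le> exp (13/28) * exp (13/28::real)"
    by (intro mult_mono) auto
  then have "(2::real) \<le> exp (13/14)"
    by (simp flip: exp_add)
  then show ?thesis
    by (metis exp_gt_zero ln_exp ln_le_cancel_iff zero_less_numeral)
qed

lemma ln_le_log_2: "1 \<le> x \<Longrightarrow> ln x \<le> log 2 x"
proof -
  assume "1 \<le> x"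
  then have "ln x * ln 2 \<le> ln x * 1"
    using ln_2_less_1 by (intro mult_left_mono) auto
  then show ?thesis
    by (simp add: log_def le_divide_eq)
qed

lemma one_le_mult_power_Delta:
  fixes e :: real
  assumes "0 < e" "e \<le> 1/14"
  shows "1 \<le> e * (1 + e) ^ nat \<lceil>log 2 (1 / e) / e\<rceil>"
proof -
  define D where "D = nat \<lceil>log 2 (1 / e) / e\<rceil>"
  have "e - e\<^sup>2 \<le> ln (1 + e)"
    using assms by (intro ln_one_plus_pos_lower_bound) auto
  moreover have "e * ln 2 \<le> e * (1 - e)"
    using ln_2_le assms by (intro mult_left_mono) auto
  ultimately have ln_step: "e * ln 2 \<le> ln (1 + e)"
    by (simp add: power2_eq_square algebra_simps)
  have "log 2 (1 / e) / e \<le> real D"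
    unfolding D_def by linarith
  moreover have "0 \<le> log 2 (1 / e)"
    using assms by simp
  ultimately have "(log 2 (1 / e) / e) * (e * ln 2) \<le> real D * ln (1 + e)"
    using ln_step assms by (intro mult_mono) auto
  moreover have "ln (1 / e) = (log 2 (1 / e) / e) * (e * ln 2)"
    using assms by (simp add: log_def field_simps)
  ultimately have "ln (1 / e) \<le> real D * ln (1 + e)"
    by simp
  also have "\<dots> = ln ((1 + e) ^ D)"
    using assms by (simp add: ln_realpow)
  finally have "1 / e \<le> (1 + e) ^ D"
    using assms by (subst (asm) ln_le_cancel_iff) auto
  then show ?thesis
    using assms by (simp add: D_def field_simps)
qed

text \<open>Phase 2 guesses the budget \<open>b\<close> left beside the costliest element of an optimum.\<close>

lemma geometric_guess:
  fixes e B b :: real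
  assumes "0 < e" "e \<le> 1/14" "0 < B" "e * B \<le> b" "b < B"
  obtains l where "l < nat \<lceil>log 2 (1 / e) / e\<rceil>"
    "e * B * (1 + e) ^ l \<le> b" "b < e * B * (1 + e) ^ l * (1 + e)"
proof -
  define \<Delta> where "\<Delta> = nat \<lceil>log 2 (1 / e) / e\<rceil>"
  define P where "P = (\<lambda>l. l \<le> \<Delta> \<and> e * B * (1 + e) ^ l \<le> b)"
  have bounded: "\<And>l. P l \<Longrightarrow> l \<le> \<Delta>"
    by (simp add: P_def)
  have "P 0"
    using assms by (simp add: P_def)
  then have greatest: "P (Greatest P)"
    by (rule GreatestI_nat) (rule bounded)
  have not_next: "\<not> P (Suc (Greatest P))"
    using Greatest_le_nat[OF _ bounded] by fastforce
  have "B * 1 \<le> B * (e * (1 + e) ^ \<Delta>)"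
    using one_le_mult_power_Delta[OF assms(1,2)] assms(3) by (intro mult_left_mono) (auto simp: \<Delta>_def)
  then have "B \<le> e * B * (1 + e) ^ \<Delta>"
    by (simp add: ac_simps)
  then have "Greatest P < \<Delta>"
    using greatest assms(5) by (metis P_def le_less not_less order.trans)
  then show ?thesis
    using that[of "Greatest P"] greatest not_next by (simp add: P_def \<Delta>_def algebra_simps)
qed

lemma p1_passes_Least:
  fixes e \<Gamma> B :: real
  assumes "0 < B" "0 \<le> \<Gamma>"
  shows "p1_passes e \<Gamma> B = (LEAST k. 19 / e * (1 - e) ^ k < 1 - e)"
proof (cases "0 < \<Gamma>")
  case True
  then have pos: "0 < \<Gamma> / (6 * B)"
    using assms by simp
  have "\<not> \<Gamma> * (1 - e) / (6 * B) \<le> 19 * \<Gamma> / (6 * e * B) * (1 - e) ^ k \<longleftrightarrow> 19 / e * (1 - e) ^ k < 1 - e" for k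
  proof -
    have "19 * \<Gamma> / (6 * e * B) * (1 - e) ^ k = (\<Gamma> / (6 * B)) * (19 / e * (1 - e) ^ k)"
      "\<Gamma> * (1 - e) / (6 * B) = (\<Gamma> / (6 * B)) * (1 - e)"
      by (simp_all add: field_simps)
    then show ?thesis
      by (simp only: not_le mult_less_cancel_left_pos[OF pos])
  qed
  then show ?thesis
    using True by (simp add: p1_passes_def)
qed (use assms in \<open>simp add: p1_passes_def not_le\<close>)

lemma p1_passes_bounds:
  fixes e \<Gamma> B :: real
  assumes e: "0 < e" "e \<le> 1/14" and "0 < B" "0 \<le> \<Gamma>"
  defines "K \<equiv> p1_passes e \<Gamma> B"
  shows "1 \<le> K" "19 / e * (1 - e) ^ (K - 1) < 1"
    and "real K \<le> ln (19 / (e * (1 - e))) / e + 2"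
proof -
  define P where "P = (\<lambda>k. 19 / e * (1 - e) ^ k < 1 - e)"
  have K: "K = (LEAST k. P k)"
    using p1_passes_Least assms by (simp add: K_def P_def)
  define L where "L = ln (19 / (e * (1 - e)))"
  have "e * (1 - e) \<le> 1"
    using e by (simp add: mult_le_one)
  then have "0 \<le> L"
    using e by (simp add: L_def field_simps)
  define k0 where "k0 = nat \<lceil>L / e\<rceil> + 1"
  have "L / e < real k0"
    using \<open>0 \<le> L\<close> e by (simp add: k0_def) linarith
  then have "L < e * real k0"
    using e by (simp add: field_simps)
  have "P k0"
  proof -
    have "(1 - e) ^ k0 \<le> exp (- e) ^ k0"
      using e by (intro power_mono) (auto simp: order.trans[OF _ exp_ge_add_one_self])
    also have "\<dots> = exp (- (e * real k0))"
      by (simp flip: exp_of_nat_mult add: algebra_simps)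
    also have "\<dots> < exp (- L)"
      using \<open>L < e * real k0\<close> by simp
    also have "\<dots> = e * (1 - e) / 19"
      unfolding L_def using e by (simp add: exp_minus exp_ln)
    finally show ?thesis
      unfolding P_def using e by (simp add: field_simps)
  qed
  then have PK: "P K" and "K \<le> k0"
    unfolding K by (rule LeastI, rule Least_le)
  moreover have "real k0 \<le> L / e + 2"
    using \<open>0 \<le> L\<close> e by (simp add: k0_def) linarith
  ultimately show "real K \<le> L / e + 2"
    by linarith
  have "1 \<le> 19 / e"
    using e by (simp add: field_simps)
  then have "\<not> P 0"
    unfolding P_def using e by (simp only: power_0 mult_1_right not_less)
  then show "1 \<le> K"
    using PK by (cases K) auto
  then have "(1 - e) ^ K = (1 - e) ^ (K - 1) * (1 - e)"
    by (simp add: power_Suc2[symmetric])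
  then have "(19 / e * (1 - e) ^ (K - 1)) * (1 - e) < 1 * (1 - e)"
    using PK by (simp add: P_def)
  then show "19 / e * (1 - e) ^ (K - 1) < 1"
    using e by (simp only: mult_less_cancel_right_pos)
qed

lemma threshold_schedule:
  fixes \<Gamma> B \<epsilon>' :: real
  assumes eps: "0 < \<epsilon>'" "\<epsilon>' \<le> 1/14" and "0 < B" "0 \<le> \<Gamma>"
    and \<theta>: "\<theta> = (\<lambda>k. 19 * \<Gamma> / (6 * \<epsilon>' * B) * (1 - \<epsilon>') ^ k)"
  shows "0 \<le> \<theta> k" "\<theta> (Suc k) \<le> \<theta> k" "\<theta> (Suc k) = (1 - \<epsilon>') * \<theta> k" "\<theta> 0 * (\<epsilon>' * B) = 19 * \<Gamma> / 6"
    and "0 < \<Gamma> \<Longrightarrow> \<theta> (p1_passes \<epsilon>' \<Gamma> B - 1) < \<Gamma> / (6 * B)"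
proof -
  have start: "0 \<le> 19 * \<Gamma> / (6 * \<epsilon>' * B)"
    using assms by simp
  show "0 \<le> \<theta> k"
    unfolding \<theta> using start eps by (intro mult_nonneg_nonneg) auto
  show "\<theta> (Suc k) \<le> \<theta> k"
    unfolding \<theta> using eps by (intro mult_left_mono[OF _ start] power_decreasing) auto
  show "\<theta> (Suc k) = (1 - \<epsilon>') * \<theta> k" "\<theta> 0 * (\<epsilon>' * B) = 19 * \<Gamma> / 6"
    using assms by (simp_all add: \<theta>)
  define K where "K = p1_passes \<epsilon>' \<Gamma> B"
  assume "0 < \<Gamma>"
  have "\<theta> (K - 1) = \<Gamma> / (6 * B) * (19 / \<epsilon>' * (1 - \<epsilon>') ^ (K - 1))"
    by (simp add: \<theta> field_simps)
  also have "\<dots> < \<Gamma> / (6 * B) * 1"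
    using p1_passes_bounds(2)[OF eps assms(3,4)] \<open>0 < \<Gamma>\<close> assms(3)
    by (intro mult_strict_left_mono) (simp_all add: K_def)
  finally show "\<theta> (p1_passes \<epsilon>' \<Gamma> B - 1) < \<Gamma> / (6 * B)"
    by (simp add: K_def)
qed

subsection \<open>Correctness of DLA\<close>

fun phase1_trace ::
    "('a set \<Rightarrow> real) \<Rightarrow> ('a \<Rightarrow> real) \<Rightarrow> real \<Rightarrow> (nat \<Rightarrow> real) \<Rightarrow> 'a list \<Rightarrow> nat \<Rightarrow> 'a list \<times> 'a list" where
  "phase1_trace f c B \<theta> vs 0 = ([], [])"
| "phase1_trace f c B \<theta> vs (Suc t) =
     fst (p1_step f c B (\<theta> (t div length vs)) (vs ! (t mod length vs)) (phase1_trace f c B \<theta> vs t))"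

lemma fold_pass_eq_trace:
  "j \<le> length vs \<Longrightarrow> fold (\<lambda>e st. fst (p1_step f c B (\<theta> k) e st)) (take j vs) (phase1_trace f c B \<theta> vs (k * length vs))
     = phase1_trace f c B \<theta> vs (k * length vs + j)"
proof (induction j)
  case (Suc j)
  then have "take (Suc j) vs = take j vs @ [vs ! j]"
    "(k * length vs + j) div length vs = k" "(k * length vs + j) mod length vs = j"
    by (auto simp: take_Suc_conv_app_nth div_add1_eq)
  then show ?case
    using Suc by simp
qed simp

lemma fold_passes_eq_trace:
  "fold (\<lambda>k st. fold (\<lambda>e st. fst (p1_step f c B (\<theta> k) e st)) vs st) [0..<K] ([], [])
     = phase1_trace f c B \<theta> vs (K * length vs)"
proof (induction K)
  case (Suc K)
  have "fold (\<lambda>e st. fst (p1_step f c B (\<theta> K) e st)) vs (phase1_trace f c B \<theta> vs (K * length vs))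
        = phase1_trace f c B \<theta> vs (K * length vs + length vs)"
    using fold_pass_eq_trace[of "length vs" vs f c B \<theta> K] by simp
  then show ?case
    using Suc.IH by (simp add: add.commute)
qed simp

lemma (in budgeted) phase1_run_trace:
  assumes "distinct vs" "set vs = V" "vs \<noteq> []" "\<And>k. 0 \<le> \<theta> k" "\<And>k. \<theta> (Suc k) \<le> \<theta> k"
  shows "phase1_run V f c B vs \<theta> (\<lambda>t. fst (phase1_trace f c B \<theta> vs t)) (\<lambda>t. snd (phase1_trace f c B \<theta> vs t))"
proof unfold_locales
  fix t
  have "0 < c (vs ! (t mod length vs))"
    using assms(2,3) by (intro cost_pos) auto
  from p1_step_choice[where c=c and e="vs ! (t mod length vs)", OF this,
      of f B "\<theta> (t div length vs)" "fst (phase1_trace f c B \<theta> vs t)" "snd (phase1_trace f c B \<theta> vs t)"]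
  show "p1_choice f c B (\<theta> (t div length vs)) (vs ! (t mod length vs))
      (fst (phase1_trace f c B \<theta> vs t)) (fst (phase1_trace f c B \<theta> vs (Suc t)))
      (snd (phase1_trace f c B \<theta> vs t)) (snd (phase1_trace f c B \<theta> vs (Suc t)))"
    by simp
qed (use assms in auto)

lemma fold_snoc_map: "fold (\<lambda>l acc. acc @ [g l]) xs a = a @ map g xs"
  by (induction xs arbitrary: a) auto

lemma fst_DLA:
  "fst (DLA f c B \<epsilon> vs) =
   (let S' = fst (LA f c B vs); \<Gamma> = f S'; \<epsilon>' = \<epsilon> / 14; \<Delta> = nat \<lceil>log 2 (1 / \<epsilon>') / \<epsilon>'\<rceil>;
        \<theta> = (\<lambda>k. 19 * \<Gamma> / (6 * \<epsilon>' * B) * (1 - \<epsilon>') ^ k);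
        st = phase1_trace f c B \<theta> vs (p1_passes \<epsilon>' \<Gamma> B * length vs)
    in fst (argmaxM (qry f) ([S', set (fst st), set (snd st)] @
         map (\<lambda>l. fst (p2_cand f c B \<epsilon>' vs (fst st) l)) [0..<Suc \<Delta>] @
         map (\<lambda>l. fst (p2_cand f c B \<epsilon>' vs (snd st) l)) [0..<Suc \<Delta>])))"
  unfolding DLA_def Let_def fold_passes_eq_trace[symmetric]
  by (simp only: fst_bnd fst_ret fst_qry fst_foldM fold_snoc_map append_Nil)

lemma (in budgeted) p2_cand_props:
  fixes \<epsilon>' :: real and l :: nat
  assumes "set xs \<subseteq> V" "cost c (set xs) \<le> B" "set vs = V" "vs \<noteq> []" "\<And>e. e \<in> V \<Longrightarrow> c e \<le> B"
  defines "A \<equiv> prefix_set c (\<epsilon>' * B * (1 + \<epsilon>') ^ l) xs"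
  shows "fst (p2_cand f c B \<epsilon>' vs xs l) \<subseteq> V" "cost c (fst (p2_cand f c B \<epsilon>' vs xs l)) \<le> B"
    and "\<And>e. e \<in> V \<Longrightarrow> cost c (insert e A) \<le> B \<Longrightarrow> f (insert e A) \<le> f (fst (p2_cand f c B \<epsilon>' vs xs l))"
proof -
  define L where "L = filter (\<lambda>e. cost c (insert e A) \<le> B) vs"
  define best where "best = fst (argmaxM (\<lambda>e. qry f (insert e A)) L)"
  have out: "fst (p2_cand f c B \<epsilon>' vs xs l) = insert best A"
    by (simp add: p2_cand_def Let_def A_def L_def best_def)
  have A: "A \<subseteq> set xs"
    unfolding A_def by (rule prefix_set_subset)
  have "cost c A \<le> cost c (set xs)"
    using A assms(1) by (rule cost_mono_on)
  then have cost_A: "cost c A \<le> B"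
    using assms(2) by simp
  obtain e where e: "e \<in> set vs" "cost c (insert e A) \<le> B"
  proof (cases "A = {}")
    case True
    have "hd vs \<in> V"
      using assms(3,4) by auto
    then show ?thesis
      using True assms(3,5) by (intro that[of "hd vs"]) (auto simp: cost_def)
  next
    case False
    then obtain e where "e \<in> A"
      by blast
    then show ?thesis
      using cost_A A assms(1,3) by (intro that[of e]) (auto simp: insert_absorb)
  qed
  then have "L \<noteq> []"
    unfolding L_def filter_empty_conv by blast
  note best = argmaxM_max[OF this, where g="\<lambda>e. qry f (insert e A)", folded best_def]
  have "best \<in> V" "cost c (insert best A) \<le> B"
    using best(1) assms(3) by (auto simp: L_def)
  then show "fst (p2_cand f c B \<epsilon>' vs xs l) \<subseteq> V" "cost c (fst (p2_cand f c B \<epsilon>' vs xs l)) \<le> B"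
    using A assms(1) by (auto simp: out)
  fix e
  assume "e \<in> V" "cost c (insert e A) \<le> B"
  then have "e \<in> set L"
    using assms(3) by (simp add: L_def)
  then show "f (insert e A) \<le> f (fst (p2_cand f c B \<epsilon>' vs xs l))"
    using best(2) by (simp add: out)
qed

context budgeted
begin

lemma phase1_run_approx:
  fixes \<epsilon>' \<Gamma> F :: real and K :: nat
  assumes run: "phase1_run V f c B vs \<theta> X Y"
    and eps: "0 < \<epsilon>'" "\<epsilon>' \<le> 1/14"
    and ratio: "\<And>k. \<theta> (Suc k) = (1 - \<epsilon>') * \<theta> k" and start: "\<theta> 0 * (\<epsilon>' * B) = 19 * \<Gamma> / 6"
    and Gamma: "0 < \<Gamma>" "\<Gamma> \<le> F" and passes: "1 \<le> K" "\<theta> (K - 1) < \<Gamma> / (6 * B)"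
    and LA: "\<And>Q. Q \<subseteq> V \<Longrightarrow> cost c Q \<le> B \<Longrightarrow> f Q \<le> 18 * \<Gamma>" "\<And>u. u \<in> V \<Longrightarrow> f {u} \<le> \<Gamma>"
    and sides: "f (set (X (K * length vs))) \<le> F" "f (set (Y (K * length vs))) \<le> F"
    and completions:
      "\<And>l e. l < nat \<lceil>log 2 (1 / \<epsilon>') / \<epsilon>'\<rceil> \<Longrightarrow> e \<in> V \<Longrightarrow>
         cost c (insert e (prefix_set c (\<epsilon>' * B * (1 + \<epsilon>') ^ l) (X (K * length vs)))) \<le> B \<Longrightarrow>
         f (insert e (prefix_set c (\<epsilon>' * B * (1 + \<epsilon>') ^ l) (X (K * length vs)))) \<le> F"
      "\<And>l e. l < nat \<lceil>log 2 (1 / \<epsilon>') / \<epsilon>'\<rceil> \<Longrightarrow> e \<in> V \<Longrightarrow>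
         cost c (insert e (prefix_set c (\<epsilon>' * B * (1 + \<epsilon>') ^ l) (Y (K * length vs)))) \<le> B \<Longrightarrow>
         f (insert e (prefix_set c (\<epsilon>' * B * (1 + \<epsilon>') ^ l) (Y (K * length vs)))) \<le> F"
    and Q: "Q \<subseteq> V" "cost c Q \<le> B" "Q \<noteq> {}"
  shows "f Q \<le> (6 + 14 * \<epsilon>') * F"
proof -
  interpret run: phase1_run V f c B vs \<theta> X Y
    by (rule run)
  have other: "phase1_run V f c B vs \<theta> Y X"
    by (rule run.swap)
  obtain omax where omax: "omax \<in> Q" "\<And>u. u \<in> Q \<Longrightarrow> c u \<le> c omax"
    using finite_costliest[where c=c, OF finite_subset[OF Q(1) finite_ground] Q(3)] by blast
  define b where "b = (if c omax \<le> (1 - \<epsilon>') * B then B - c omax else (1 - \<epsilon>') * B)"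
  have rest: "(c omax \<le> (1 - \<epsilon>') * B \<and> b = B - c omax) \<or> ((1 - \<epsilon>') * B < c omax \<and> b = (1 - \<epsilon>') * B)"
    by (simp add: b_def)
  have "0 < c omax"
    using omax(1) Q(1) cost_pos by blast
  moreover have "0 < \<epsilon>' * B" "\<epsilon>' * B \<le> (1 - \<epsilon>') * B"
    using eps budget_pos by (simp_all add: mult_right_mono)
  ultimately have "\<epsilon>' * B \<le> b" "b < B"
    using rest by (auto simp: left_diff_distrib)
  then obtain l where l: "l < nat \<lceil>log 2 (1 / \<epsilon>') / \<epsilon>'\<rceil>"
    "\<epsilon>' * B * (1 + \<epsilon>') ^ l \<le> b" "b < \<epsilon>' * B * (1 + \<epsilon>') ^ l * (1 + \<epsilon>')"
    by (rule geometric_guess[OF eps budget_pos])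
  have guess: "\<epsilon>' * B \<le> \<epsilon>' * B * (1 + \<epsilon>') ^ l"
    using eps budget_pos by simp
  have opt: "f Q \<le> 19 * \<Gamma>"
    using LA(1)[OF Q(1,2)] Gamma(1) by simp
  have single: "f {omax} \<le> \<Gamma>"
    using LA(2)[of omax] omax(1) Q(1) by blast
  interpret X: phase2_side V f c B vs \<theta> X Y \<epsilon>' \<Gamma> F K Q omax b "\<epsilon>' * B * (1 + \<epsilon>') ^ l"
    by (intro phase2_side.intro run phase2_side_axioms.intro)
      (fact eps ratio start Gamma passes opt single sides completions(1)[OF l(1)] Q omax guess l rest)+
  interpret Y: phase2_side V f c B vs \<theta> Y X \<epsilon>' \<Gamma> F K Q omax b "\<epsilon>' * B * (1 + \<epsilon>') ^ l"
    by (intro phase2_side.intro other phase2_side_axioms.intro)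
      (fact eps ratio start Gamma passes opt single sides completions(2)[OF l(1)] Q omax guess l rest)+
  have "X.A \<inter> Y.A = {}"
    using run.sides_disjoint[of "K * length vs"] prefix_set_subset[of c _ "X (K * length vs)"]
      prefix_set_subset[of c _ "Y (K * length vs)"] by blast
  then have "f Q \<le> f (Q \<union> X.A) + f (Q \<union> Y.A)"
    by (rule le_union_disjoint_pair[OF Q(1) X.prefix_subset Y.prefix_subset])
  moreover have "0 \<le> \<epsilon>' * F" "6 * F \<le> (6 + 14 * \<epsilon>') * F"
    using eps Gamma by (simp_all add: algebra_simps)
  ultimately show ?thesis
    using X.union_prefix_bound Y.union_prefix_bound by (simp add: algebra_simps) linarith
qed

lemma DLA_guarantee:
  assumes vs: "distinct vs" "set vs = V" "vs \<noteq> []" and fits: "\<And>e. e \<in> V \<Longrightarrow> c e \<le> B"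
    and eps: "0 < \<epsilon>" "\<epsilon> < 1"
  defines "S \<equiv> fst (DLA f c B \<epsilon> vs)"
  shows "S \<subseteq> V" "cost c S \<le> B" "\<And>Q. Q \<subseteq> V \<Longrightarrow> cost c Q \<le> B \<Longrightarrow> f Q \<le> (6 + \<epsilon>) * f S"
proof -
  define S' where "S' = fst (LA f c B vs)"
  define \<Gamma> where "\<Gamma> = f S'"
  define \<epsilon>' where "\<epsilon>' = \<epsilon> / 14"
  define \<Delta> where "\<Delta> = nat \<lceil>log 2 (1 / \<epsilon>') / \<epsilon>'\<rceil>"
  define \<theta> where "\<theta> = (\<lambda>k. 19 * \<Gamma> / (6 * \<epsilon>' * B) * (1 - \<epsilon>') ^ k)"
  define K where "K = p1_passes \<epsilon>' \<Gamma> B"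
  define X where "X = (\<lambda>t. fst (phase1_trace f c B \<theta> vs t))"
  define Y where "Y = (\<lambda>t. snd (phase1_trace f c B \<theta> vs t))"
  define T where "T = K * length vs"
  define cands where "cands = [S', set (X T), set (Y T)] @
    map (\<lambda>l. fst (p2_cand f c B \<epsilon>' vs (X T) l)) [0..<Suc \<Delta>] @
    map (\<lambda>l. fst (p2_cand f c B \<epsilon>' vs (Y T) l)) [0..<Suc \<Delta>]"
  have S: "S = fst (argmaxM (qry f) cands)"
    unfolding S_def fst_DLA Let_def cands_def X_def Y_def T_def K_def \<theta>_def \<Delta>_def \<epsilon>'_def \<Gamma>_def S'_def
    by (rule refl)
  have "cands \<noteq> []"
    by (simp add: cands_def)
  note S_max = argmaxM_max[OF this, where g="qry f", folded S]
  note LA = LA_guarantee[OF vs fits, folded S'_def \<Gamma>_def]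
  have eps': "0 < \<epsilon>'" "\<epsilon>' \<le> 1/14"
    using eps by (simp_all add: \<epsilon>'_def)
  have "0 \<le> \<Gamma>"
    using LA(1) nonneg by (simp add: \<Gamma>_def)
  note schedule = threshold_schedule[OF eps' budget_pos this \<theta>_def]
  have run: "phase1_run V f c B vs \<theta> X Y"
    unfolding X_def Y_def using schedule(1,2) by (intro phase1_run_trace vs)
  interpret run: phase1_run V f c B vs \<theta> X Y
    by (rule run)
  interpret other: phase1_run V f c B vs \<theta> Y X
    by (rule run.swap)
  have sides: "set (X T) \<subseteq> V" "cost c (set (X T)) \<le> B" "set (Y T) \<subseteq> V" "cost c (set (Y T)) \<le> B"
    using run.side_invariant[of T] other.side_invariant[of T] by simp_all
  note p2X = p2_cand_props[OF sides(1,2) vs(2,3) fits, where \<epsilon>'=\<epsilon>']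
  note p2Y = p2_cand_props[OF sides(3,4) vs(2,3) fits, where \<epsilon>'=\<epsilon>']
  have "R \<subseteq> V \<and> cost c R \<le> B" if "R \<in> set cands" for R
  proof -
    from that consider "R \<in> {S', set (X T), set (Y T)}"
      | l where "R = fst (p2_cand f c B \<epsilon>' vs (X T) l)" | l where "R = fst (p2_cand f c B \<epsilon>' vs (Y T) l)"
      unfolding cands_def by auto
    then show ?thesis
      by cases (use LA(1,2) sides p2X(1,2) p2Y(1,2) in auto)
  qed
  then show "S \<subseteq> V" "cost c S \<le> B"
    using S_max(1) by auto
  fix Q
  assume Q: "Q \<subseteq> V" "cost c Q \<le> B"
  have "\<Gamma> \<le> f S"
    using S_max(2)[of S'] by (simp add: cands_def \<Gamma>_def)
  show "f Q \<le> (6 + \<epsilon>) * f S"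
  proof (cases "\<Gamma> = 0 \<or> Q = {}")
    case True
    have "0 \<le> (6 + \<epsilon>) * f S"
      using \<open>0 \<le> \<Gamma>\<close> \<open>\<Gamma> \<le> f S\<close> eps by simp
    then show ?thesis
      using True LA(4)[of Q] Q f_empty by auto
  next
    case False
    have "1 \<le> K"
      using p1_passes_bounds(1)[OF eps' budget_pos \<open>0 \<le> \<Gamma>\<close>] by (simp add: K_def)
    have completion: "f (insert e (prefix_set c (\<epsilon>' * B * (1 + \<epsilon>') ^ l) (Z T))) \<le> f S"
      if "Z = X \<or> Z = Y" "l < \<Delta>" "e \<in> V" "cost c (insert e (prefix_set c (\<epsilon>' * B * (1 + \<epsilon>') ^ l) (Z T))) \<le> B"
      for Z l e
      using that p2X(3) p2Y(3) S_max(2)[of "fst (p2_cand f c B \<epsilon>' vs (Z T) l)"]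
      by (fastforce simp: cands_def)
    have "f Q \<le> (6 + 14 * \<epsilon>') * f S"
    proof (rule phase1_run_approx[OF run eps' schedule(3,4)])
      show "f (set (X (K * length vs))) \<le> f S" "f (set (Y (K * length vs))) \<le> f S"
        using S_max(2) by (simp_all add: cands_def T_def)
    qed (use False \<open>0 \<le> \<Gamma>\<close> \<open>\<Gamma> \<le> f S\<close> \<open>1 \<le> K\<close> schedule(5) LA(3,4) Q completion
         in \<open>auto simp: T_def \<Delta>_def K_def\<close>)
    then show ?thesis
      by (simp add: \<epsilon>'_def)
  qed
qed

end

subsection \<open>Query complexity\<close>

lemma snd_LA_le: "vs \<noteq> [] \<Longrightarrow> snd (LA f c B vs) \<le> 10 * length vs"
proof -
  assume "vs \<noteq> []"
  have "snd (foldM (la_step f c B) (filter (\<lambda>e. c e \<le> B / 2) vs) ([], []))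
      \<le> 6 * length (filter (\<lambda>e. c e \<le> B / 2) vs)"
    by (rule snd_foldM_le) (simp add: la_step_def Let_def)
  also have "\<dots> \<le> 6 * length vs"
    by simp
  finally have "snd (foldM (la_step f c B) (filter (\<lambda>e. c e \<le> B / 2) vs) ([], [])) \<le> 6 * length vs" .
  moreover have "1 \<le> length vs"
    using \<open>vs \<noteq> []\<close> by (simp add: Suc_le_eq)
  ultimately show ?thesis
    by (simp add: LA_def snd_argmaxM)
qed

lemma snd_phase1_le:
  "snd (foldM (\<lambda>k st. foldM (p1_step f c B (\<theta> k)) vs st) ks st) \<le> 4 * length vs * length ks"
proof -
  have "snd (foldM (p1_step f c B (\<theta> k)) vs st) \<le> 4 * length vs" for k st
    using snd_foldM_le[of vs "p1_step f c B (\<theta> k)" 4 st] by (simp add: p1_step_def Let_def)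
  then show ?thesis
    using snd_foldM_le[of ks "\<lambda>k st. foldM (p1_step f c B (\<theta> k)) vs st" "4 * length vs" st] by simp
qed

lemma snd_phase2_le:
  "snd (foldM (\<lambda>l acc. bnd (p2_cand f c B \<epsilon>' vs xs l) (\<lambda>X. ret (acc @ [X]))) ls acc) \<le> length vs * length ls"
  by (intro snd_foldM_le) (simp add: p2_cand_def Let_def snd_argmaxM)

lemma length_fst_foldM_snoc:
  "length (fst (foldM (\<lambda>l acc. bnd (g l) (\<lambda>X. ret (acc @ [X]))) ls acc)) = length acc + length ls"
  by (induction ls arbitrary: acc) auto

lemma snd_argmaxM_qry: "snd (argmaxM (qry f) xs) = length xs"
  by (simp add: snd_argmaxM)

lemma snd_DLA_le:
  fixes f :: "'a set \<Rightarrow> real" and c :: "'a \<Rightarrow> real" and B \<epsilon> :: real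
  assumes "vs \<noteq> []"
  defines "K \<equiv> p1_passes (\<epsilon> / 14) (f (fst (LA f c B vs))) B"
    and "\<Delta> \<equiv> nat \<lceil>log 2 (1 / (\<epsilon> / 14)) / (\<epsilon> / 14)\<rceil>"
  shows "snd (DLA f c B \<epsilon> vs) \<le> length vs * (18 + 4 * K + 4 * \<Delta>)"
proof -
  define n where "n = length vs"
  have "1 \<le> n"
    using assms(1) by (simp add: n_def Suc_le_eq)
  then have "\<Delta> \<le> n * \<Delta>"
    by simp
  have "snd (DLA f c B \<epsilon> vs) \<le> 10 * n + (1 + (4 * n * length [0..<K] +
      (n * length [0..<Suc \<Delta>] + (n * length [0..<Suc \<Delta>] + (3 + 2 * Suc \<Delta>)))))"
    unfolding DLA_def Let_def K_def \<Delta>_def n_def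
    by (simp only: snd_bnd fst_bnd snd_qry fst_qry snd_ret fst_ret snd_argmaxM_qry)
      (intro add_mono order_refl snd_LA_le[OF assms(1)] snd_phase1_le snd_phase2_le;
       simp add: length_fst_foldM_snoc)
  moreover have "n * (18 + 4 * K + 4 * \<Delta>) = 18 * n + 4 * (n * K) + 4 * (n * \<Delta>)"
    "4 * n * length [0..<K] = 4 * (n * K)" "n * length [0..<Suc \<Delta>] = n * \<Delta> + n"
    "2 * Suc \<Delta> = 2 * \<Delta> + 2"
    by (simp_all add: algebra_simps)
  ultimately show ?thesis
    using \<open>1 \<le> n\<close> \<open>\<Delta> \<le> n * \<Delta>\<close> unfolding n_def by linarith
qed

lemma inverse_le_log_bound:
  fixes \<epsilon> :: real
  assumes "0 < \<epsilon>" "\<epsilon> < 1"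
  shows "1 / \<epsilon> \<le> 2 + 2 * (log 2 (1 / \<epsilon>) / \<epsilon>)"
proof (cases "\<epsilon> < 1/2")
  case True
  then have "log 2 2 \<le> log 2 (1 / \<epsilon>)"
    using assms by (subst log_le_cancel_iff) (auto simp: field_simps)
  then have "1 / \<epsilon> \<le> log 2 (1 / \<epsilon>) / \<epsilon>"
    using assms by (simp add: divide_right_mono)
  moreover have "0 \<le> log 2 (1 / \<epsilon>) / \<epsilon>"
    using assms by simp
  ultimately show ?thesis
    by linarith
next
  case False
  then have "1 / \<epsilon> \<le> 2"
    using assms by (simp add: field_simps)
  moreover have "0 \<le> log 2 (1 / \<epsilon>) / \<epsilon>"
    using assms by simp
  ultimately show ?thesis
    by linarith
qed

lemma passes_le_log_bound:
  fixes \<epsilon> :: real and K :: nat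
  assumes e: "0 < \<epsilon>" "\<epsilon> < 1"
    and K: "real K \<le> ln (19 / ((\<epsilon> / 14) * (1 - \<epsilon> / 14))) / (\<epsilon> / 14) + 2"
  shows "real K \<le> 8100 * (1 + log 2 (1 / \<epsilon>) / \<epsilon>)"
proof -
  define e' where "e' = \<epsilon> / 14"
  have e': "0 < e'" "13/14 \<le> 1 - e'"
    using e by (auto simp: e'_def)
  have "19 / (e' * (1 - e')) = (266 / (1 - e')) * (1 / \<epsilon>)"
    using e e' by (simp add: e'_def field_simps)
  moreover have "ln (266 / (1 - e') * (1 / \<epsilon>)) = ln (266 / (1 - e')) + ln (1 / \<epsilon>)"
    using e e' by (subst ln_mult) auto
  ultimately have "ln (19 / (e' * (1 - e'))) = ln (266 / (1 - e')) + ln (1 / \<epsilon>)"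
    by simp
  moreover have "ln (266 / (1 - e')) \<le> 266 / (1 - e')"
    using e' by (intro ln_bound) simp
  moreover have "266 / (1 - e') \<le> 266 / (13/14)"
    using e' by (intro divide_left_mono) auto
  moreover have "ln (1 / \<epsilon>) \<le> log 2 (1 / \<epsilon>)"
    using e by (intro ln_le_log_2) simp
  ultimately have "ln (19 / (e' * (1 - e'))) / e' \<le> (287 + log 2 (1 / \<epsilon>)) / e'"
    using e' by (intro divide_right_mono) auto
  also have "\<dots> = 4018 * (1 / \<epsilon>) + 14 * (log 2 (1 / \<epsilon>) / \<epsilon>)"
    using e by (simp add: e'_def field_simps)
  finally show ?thesis
    using K inverse_le_log_bound[OF e] e by (simp add: e'_def)
qed

lemma Delta_le_log_bound:
  fixes \<epsilon> :: real
  assumes e: "0 < \<epsilon>" "\<epsilon> < 1"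
  shows "real (nat \<lceil>log 2 (1 / (\<epsilon> / 14)) / (\<epsilon> / 14)\<rceil>) \<le> 130 * (1 + log 2 (1 / \<epsilon>) / \<epsilon>)"
proof -
  define X where "X = log 2 (1 / (\<epsilon> / 14)) / (\<epsilon> / 14)"
  have "0 \<le> X"
    using e by (simp add: X_def)
  then have "real (nat \<lceil>X\<rceil>) \<le> X + 1"
    by linarith
  have "log 2 14 \<le> log 2 (2 ^ 4 :: real)"
    by (subst log_le_cancel_iff) auto
  also have "\<dots> = 4"
    by (subst log_nat_power) auto
  finally have "log 2 14 \<le> (4::real)" .
  moreover have "log 2 (14 * (1 / \<epsilon>)) = log 2 14 + log 2 (1 / \<epsilon>)"
    using e by (subst log_mult) auto
  ultimately have "X \<le> 56 * (1 / \<epsilon>) + 14 * (log 2 (1 / \<epsilon>) / \<epsilon>)"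
    using e by (simp add: X_def field_simps)
  then show ?thesis
    using \<open>real (nat \<lceil>X\<rceil>) \<le> X + 1\<close> inverse_le_log_bound[OF e] by (simp add: X_def)
qed

lemma DLA_query_bound:
  fixes f :: "'a set \<Rightarrow> real"
  assumes "vs \<noteq> []" "0 < \<epsilon>" "\<epsilon> < 1" "0 < B" "0 \<le> f (fst (LA f c B vs))"
  shows "real (snd (DLA f c B \<epsilon> vs)) \<le> 40000 * real (length vs) * (1 + log 2 (1 / \<epsilon>) / \<epsilon>)"
proof -
  define K where "K = p1_passes (\<epsilon> / 14) (f (fst (LA f c B vs))) B"
  define \<Delta> where "\<Delta> = nat \<lceil>log 2 (1 / (\<epsilon> / 14)) / (\<epsilon> / 14)\<rceil>"
  define L where "L = log 2 (1 / \<epsilon>) / \<epsilon>"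
  have "0 \<le> L"
    using assms by (simp add: L_def)
  have "real K \<le> 8100 * (1 + L)"
    using p1_passes_bounds(3)[of "\<epsilon> / 14" B] passes_le_log_bound[OF assms(2,3)] assms
    by (simp add: K_def L_def)
  moreover have "real \<Delta> \<le> 130 * (1 + L)"
    using Delta_le_log_bound[OF assms(2,3)] by (simp add: \<Delta>_def L_def)
  ultimately have "real (18 + 4 * K + 4 * \<Delta>) \<le> 40000 * (1 + L)"
    using \<open>0 \<le> L\<close> by simp
  moreover have "snd (DLA f c B \<epsilon> vs) \<le> length vs * (18 + 4 * K + 4 * \<Delta>)"
    unfolding K_def \<Delta>_def by (rule snd_DLA_le[OF assms(1)])
  then have "real (snd (DLA f c B \<epsilon> vs)) \<le> real (length vs) * real (18 + 4 * K + 4 * \<Delta>)"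
    by (simp only: of_nat_mult[symmetric] of_nat_le_iff)
  moreover have "real (length vs) * real (18 + 4 * K + 4 * \<Delta>) \<le> real (length vs) * (40000 * (1 + L))"
    using calculation(1) by (rule mult_left_mono) simp
  ultimately show ?thesis
    by (simp add: L_def mult.assoc mult.left_commute)
qed

theorem theorem3:
  "\<exists>C::real. \<forall>(vs::'a list) (f::'a set \<Rightarrow> real) (c::'a \<Rightarrow> real) (B::real) (\<epsilon>::real).
     distinct vs \<and> vs \<noteq> [] \<and>
     submodular_on (set vs) f \<and> (\<forall>S. S \<subseteq> set vs \<longrightarrow> f S \<ge> 0) \<and> f {} = 0 \<and>
     B > 0 \<and> (\<forall>e\<in>set vs. 0 < c e \<and> c e \<le> B) \<and> 0 < \<epsilon> \<and> \<epsilon> < 1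
     \<longrightarrow> (let S = fst (DLA f c B \<epsilon> vs); q = snd (DLA f c B \<epsilon> vs) in
           S \<subseteq> set vs \<and> cost c S \<le> B \<and>
           opt f c B (set vs) \<le> (6 + \<epsilon>) * f S \<and>
           real q \<le> C * real (length vs) * (1 + log 2 (1 / \<epsilon>) / \<epsilon>))"
proof (intro exI[of _ 40000] allI impI)
  fix vs :: "'a list" and f :: "'a set \<Rightarrow> real" and c :: "'a \<Rightarrow> real" and B \<epsilon> :: real
  assume H: "distinct vs \<and> vs \<noteq> [] \<and>
     submodular_on (set vs) f \<and> (\<forall>S. S \<subseteq> set vs \<longrightarrow> f S \<ge> 0) \<and> f {} = 0 \<and>
     B > 0 \<and> (\<forall>e\<in>set vs. 0 < c e \<and> c e \<le> B) \<and> 0 < \<epsilon> \<and> \<epsilon> < 1"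
  interpret budgeted "set vs" f c B
    by unfold_locales (use H in auto)
  have vs: "distinct vs" "set vs = set vs" "vs \<noteq> []" and fits: "\<And>e. e \<in> set vs \<Longrightarrow> c e \<le> B"
    and eps: "0 < \<epsilon>" "\<epsilon> < 1"
    using H by auto
  note DLA = DLA_guarantee[OF vs fits eps]
  have "opt f c B (set vs) \<le> (6 + \<epsilon>) * f (fst (DLA f c B \<epsilon> vs))"
    using DLA(3) budget_pos by (intro opt_le) auto
  moreover have "0 \<le> f (fst (LA f c B vs))"
    using LA_guarantee(1)[OF vs fits] nonneg by simp
  ultimately show "let S = fst (DLA f c B \<epsilon> vs); q = snd (DLA f c B \<epsilon> vs) in
      S \<subseteq> set vs \<and> cost c S \<le> B \<and> opt f c B (set vs) \<le> (6 + \<epsilon>) * f S \<and>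
      real q \<le> 40000 * real (length vs) * (1 + log 2 (1 / \<epsilon>) / \<epsilon>)"
    using DLA(1,2) DLA_query_bound[OF vs(3) eps budget_pos] by (simp add: Let_def)
qed

end
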